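(* Let $n\ge0$ and let $(\eta,\xi)$ be an $n$-Lie-isoclinism from $\mathfrak g_1$ to $\mathfrak g_2$. Let $\mathcal K=\{(g,h)\in\mathfrak g_1\oplus\mathfrak g_2:\eta(g+\mathcal Z_n^{\mathsf{Lie}}(\mathfrak g_1))=h+\mathcal Z_n^{\mathsf{Lie}}(\mathfrak g_2)\}$, $Z_{\mathfrak g_1}=\{(g,0):g\in\mathcal Z_n^{\mathsf{Lie}}(\mathfrak g_1)\}$, $Z_{\mathfrak g_2}=\{(0,h):h\in\mathcal Z_n^{\mathsf{Lie}}(\mathfrak g_2)\}$. Then: (a) $\mathcal K$ is a subalgebra of $\mathfrak g_1\oplus\mathfrak g_2$; (b) $\gamma_{n+1}^{\mathsf{Lie}}(\mathcal K)=\{(g,\xi(g)):g\in\gamma_{n+1}^{\mathsf{Lie}}(\mathfrak g_1)\}$; (c) $Z_{\mathfrak g_1}$ and $Z_{\mathfrak g_2}$ are two-sided ideals of $\mathcal K$ with $Z_{\mathfrak g_i}\cap\gamma_{n+1}^{\mathsf{Lie}}(\mathcal K)=0$ for $i=1,2$; (d) for $\{i,j\}=\{1,2\}$, $\mathfrak g_i\cong\mathcal K/Z_{\mathfrak g_j}$ and $\mathcal K/Z_{\mathfrak g_j}\sim_n\mathcal K$.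
   Context: All Leibniz algebras are over a field $\mathbb{K}$ with $\frac12\in\mathbb{K}$. A Leibniz algebra is a vector space $\mathfrak g$ with a bilinear bracket $[-,-]$ satisfying $[x,[y,z]]=[[x,y],z]-[[x,z],y]$. For $x,y\in\mathfrak g$ put $[x,y]_{lie}=[x,y]+[y,x]$. For two-sided ideals $\mathfrak m,\mathfrak n$ of $\mathfrak g$, $[\mathfrak m,\mathfrak n]_{\mathsf{Lie}}$ denotes the two-sided ideal of $\mathfrak g$ generated by $\{[m,x]_{lie}: m\in\mathfrak m, x\in\mathfrak n\}$. Lower Lie-central series: $\gamma_1^{\mathsf{Lie}}(\mathfrak g)=\mathfrak g$, $\gamma_i^{\mathsf{Lie}}(\mathfrak g)=[\gamma_{i-1}^{\mathsf{Lie}}(\mathfrak g),\mathfrak g]_{\mathsf{Lie}}$ for $i\ge2$. Upper Lie-central series: $\mathcal Z_0^{\mathsf{Lie}}(\mathfrak g)=0$, $\mathcal Z_i^{\mathsf{Lie}}(\mathfrak g)=\{x\in\mathfrak g:[x,y]_{lie}\in\mathcal Z_{i-1}^{\mathsf{Lie}}(\mathfrak g)\ \text{for all } y\in\mathfrak g\}$ for $i\ge1$. For $n\ge0$, Leibniz algebras $\mathfrak g_1,\mathfrak g_2$ are $n$-Lie-isoclinic, written $\mathfrak g_1\sim_n\mathfrak g_2$, if there exist Leibniz algebra isomorphisms $\eta:\mathfrak g_1/\mathcal Z_n^{\mathsf{Lie}}(\mathfrak g_1)\to\mathfrak g_2/\mathcal Z_n^{\mathsf{Lie}}(\mathfrak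 g_2)$ and $\xi:\gamma_{n+1}^{\mathsf{Lie}}(\mathfrak g_1)\to\gamma_{n+1}^{\mathsf{Lie}}(\mathfrak g_2)$ such that $\xi([\cdots[[x_1,x_2]_{lie},x_3]_{lie},\ldots,x_{n+1}]_{lie})=[\cdots[[y_1,y_2]_{lie},y_3]_{lie},\ldots,y_{n+1}]_{lie}$ whenever $x_i\in\mathfrak g_1$, $y_i\in\mathfrak g_2$ satisfy $\eta(x_i+\mathcal Z_n^{\mathsf{Lie}}(\mathfrak g_1))=y_i+\mathcal Z_n^{\mathsf{Lie}}(\mathfrak g_2)$ for $i=1,\ldots,n+1$; $(\eta,\xi)$ is then called an $n$-Lie-isoclinism from $\mathfrak g_1$ to $\mathfrak g_2$. *)

theory Defs
  imports Main
begin

record ('k, 'a) lalg =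
  lcarrier :: "'a set"
  ladd :: "'a \<Rightarrow> 'a \<Rightarrow> 'a"
  lzero :: 'a
  lsmult :: "'k \<Rightarrow> 'a \<Rightarrow> 'a"
  lbr :: "'a \<Rightarrow> 'a \<Rightarrow> 'a"

definition lsub :: "('k::field, 'a) lalg \<Rightarrow> 'a \<Rightarrow> 'a \<Rightarrow> 'a" where
  "lsub L x y = ladd L x (lsmult L (-1) y)"

definition vector_space_str :: "('k::field, 'a) lalg \<Rightarrow> bool" where
  "vector_space_str L \<longleftrightarrow>
     lzero L \<in> lcarrier L \<and>
     (\<forall>x\<in>lcarrier L. \<forall>y\<in>lcarrier L. ladd L x y \<in> lcarrier L) \<and>
     (\<forall>c. \<forall>x\<in>lcarrier L. lsmult L c x \<in> lcarrier L) \<and>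
     (\<forall>x\<in>lcarrier L. \<forall>y\<in>lcarrier L. \<forall>z\<in>lcarrier L.
        ladd L (ladd L x y) z = ladd L x (ladd L y z)) \<and>
     (\<forall>x\<in>lcarrier L. \<forall>y\<in>lcarrier L. ladd L x y = ladd L y x) \<and>
     (\<forall>x\<in>lcarrier L. ladd L x (lzero L) = x) \<and>
     (\<forall>x\<in>lcarrier L. \<exists>y\<in>lcarrier L. ladd L x y = lzero L) \<and>
     (\<forall>c. \<forall>x\<in>lcarrier L. \<forall>y\<in>lcarrier L.
        lsmult L c (ladd L x y) = ladd L (lsmult L c x) (lsmult L c y)) \<and>
     (\<forall>c d. \<forall>x\<in>lcarrier L. lsmult L (c + d) x = ladd L (lsmult L c x) (lsmult L d x)) \<and>
     (\<forall>c d. \<forall>x\<in>lcarrier L. lsmult L (c * d) x = lsmult L c (lsmult L d x)) \<and>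
     (\<forall>x\<in>lcarrier L. lsmult L 1 x = x)"

definition leibniz_algebra :: "('k::field, 'a) lalg \<Rightarrow> bool" where
  "leibniz_algebra L \<longleftrightarrow>
     vector_space_str L \<and>
     (\<forall>x\<in>lcarrier L. \<forall>y\<in>lcarrier L. lbr L x y \<in> lcarrier L) \<and>
     (\<forall>c d. \<forall>x\<in>lcarrier L. \<forall>y\<in>lcarrier L. \<forall>z\<in>lcarrier L.
        lbr L (ladd L (lsmult L c x) (lsmult L d y)) z
          = ladd L (lsmult L c (lbr L x z)) (lsmult L d (lbr L y z)) \<and>
        lbr L z (ladd L (lsmult L c x) (lsmult L d y))
          = ladd L (lsmult L c (lbr L z x)) (lsmult L d (lbr L z y))) \<and>
     (\<forall>x\<in>lcarrier L. \<forall>y\<in>lcarrier L. \<forall>z\<in>lcarrier L.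
        lbr L x (lbr L y z) = lsub L (lbr L (lbr L x y) z) (lbr L (lbr L x z) y))"

definition lie_br :: "('k::field, 'a) lalg \<Rightarrow> 'a \<Rightarrow> 'a \<Rightarrow> 'a" where
  "lie_br L x y = ladd L (lbr L x y) (lbr L y x)"

definition subspace :: "('k::field, 'a) lalg \<Rightarrow> 'a set \<Rightarrow> bool" where
  "subspace L S \<longleftrightarrow> S \<subseteq> lcarrier L \<and> lzero L \<in> S \<and>
     (\<forall>x\<in>S. \<forall>y\<in>S. ladd L x y \<in> S) \<and> (\<forall>c. \<forall>x\<in>S. lsmult L c x \<in> S)"

definition subalgebra :: "('k::field, 'a) lalg \<Rightarrow> 'a set \<Rightarrow> bool" where
  "subalgebra L S \<longleftrightarrow> subspace L S \<and> (\<forall>x\<in>S. \<forall>y\<in>S. lbr L x y \<in> S)"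

definition ideal :: "('k::field, 'a) lalg \<Rightarrow> 'a set \<Rightarrow> bool" where
  "ideal L I \<longleftrightarrow> subspace L I \<and>
     (\<forall>x\<in>lcarrier L. \<forall>i\<in>I. lbr L x i \<in> I \<and> lbr L i x \<in> I)"

definition ideal_gen :: "('k::field, 'a) lalg \<Rightarrow> 'a set \<Rightarrow> 'a set" where
  "ideal_gen L X = \<Inter> {I. ideal L I \<and> X \<subseteq> I}"

definition lie_comm :: "('k::field, 'a) lalg \<Rightarrow> 'a set \<Rightarrow> 'a set \<Rightarrow> 'a set" where
  "lie_comm L M N = ideal_gen L {lie_br L m x | m x. m \<in> M \<and> x \<in> N}"

text \<open>Lower Lie-central series, \<open>lower_lie L i = \<gamma>_i^Lie(L)\<close> for \<open>i \<ge> 1\<close>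
  (index 0 is an unused convention).\<close>
fun lower_lie :: "('k::field, 'a) lalg \<Rightarrow> nat \<Rightarrow> 'a set" where
  "lower_lie L 0 = lcarrier L"
| "lower_lie L (Suc 0) = lcarrier L"
| "lower_lie L (Suc (Suc i)) = lie_comm L (lower_lie L (Suc i)) (lcarrier L)"

fun upper_lie :: "('k::field, 'a) lalg \<Rightarrow> nat \<Rightarrow> 'a set" where
  "upper_lie L 0 = {lzero L}"
| "upper_lie L (Suc i) =
     {x \<in> lcarrier L. \<forall>y\<in>lcarrier L. lie_br L x y \<in> upper_lie L i}"

definition restrict_alg :: "('k, 'a) lalg \<Rightarrow> 'a set \<Rightarrow> ('k, 'a) lalg" where
  "restrict_alg L S = L\<lparr>lcarrier := S\<rparr>"

definition dsum :: "('k, 'a) lalg \<Rightarrow> ('k, 'b) lalg \<Rightarrow> ('k, 'a \<times> 'b) lalg" where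
  "dsum L1 L2 = \<lparr>lcarrier = lcarrier L1 \<times> lcarrier L2,
     ladd = (\<lambda>(a,b) (c,d). (ladd L1 a c, ladd L2 b d)),
     lzero = (lzero L1, lzero L2),
     lsmult = (\<lambda>k (a,b). (lsmult L1 k a, lsmult L2 k b)),
     lbr = (\<lambda>(a,b) (c,d). (lbr L1 a c, lbr L2 b d))\<rparr>"

definition coset :: "('k, 'a) lalg \<Rightarrow> 'a set \<Rightarrow> 'a \<Rightarrow> 'a set" where
  "coset L I x = {ladd L x i | i. i \<in> I}"

definition quot :: "('k, 'a) lalg \<Rightarrow> 'a set \<Rightarrow> ('k, 'a set) lalg" where
  "quot L I = \<lparr>lcarrier = coset L I ` lcarrier L,
     ladd = (\<lambda>A B. coset L I (ladd L (SOME a. a \<in> A) (SOME b. b \<in> B))),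
     lzero = coset L I (lzero L),
     lsmult = (\<lambda>k A. coset L I (lsmult L k (SOME a. a \<in> A))),
     lbr = (\<lambda>A B. coset L I (lbr L (SOME a. a \<in> A) (SOME b. b \<in> B)))\<rparr>"

definition alg_hom :: "('k, 'a) lalg \<Rightarrow> ('k, 'b) lalg \<Rightarrow> ('a \<Rightarrow> 'b) \<Rightarrow> bool" where
  "alg_hom L1 L2 f \<longleftrightarrow> f ` lcarrier L1 \<subseteq> lcarrier L2 \<and>
     (\<forall>x\<in>lcarrier L1. \<forall>y\<in>lcarrier L1.
        f (ladd L1 x y) = ladd L2 (f x) (f y) \<and> f (lbr L1 x y) = lbr L2 (f x) (f y)) \<and>
     (\<forall>c. \<forall>x\<in>lcarrier L1. f (lsmult L1 c x) = lsmult L2 c (f x))"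

definition alg_iso :: "('k, 'a) lalg \<Rightarrow> ('k, 'b) lalg \<Rightarrow> ('a \<Rightarrow> 'b) \<Rightarrow> bool" where
  "alg_iso L1 L2 f \<longleftrightarrow> alg_hom L1 L2 f \<and> bij_betw f (lcarrier L1) (lcarrier L2)"

definition isomorphic :: "('k, 'a) lalg \<Rightarrow> ('k, 'b) lalg \<Rightarrow> bool" where
  "isomorphic L1 L2 \<longleftrightarrow> (\<exists>f. alg_iso L1 L2 f)"

text \<open>Iterated symmetrised bracket
  \<open>lie_word L x k = [\<dots>[[x 0, x 1]_lie, x 2]_lie, \<dots>, x k]_lie\<close> (k+1 entries).\<close>
fun lie_word :: "('k::field, 'a) lalg \<Rightarrow> (nat \<Rightarrow> 'a) \<Rightarrow> nat \<Rightarrow> 'a" where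
  "lie_word L x 0 = x 0"
| "lie_word L x (Suc k) = lie_br L (lie_word L x k) (x (Suc k))"

definition lie_isoclinism ::
  "('k::field, 'a) lalg \<Rightarrow> ('k, 'b) lalg \<Rightarrow> nat \<Rightarrow> ('a set \<Rightarrow> 'b set) \<Rightarrow> ('a \<Rightarrow> 'b) \<Rightarrow> bool" where
  "lie_isoclinism L1 L2 n \<eta> \<xi> \<longleftrightarrow>
     alg_iso (quot L1 (upper_lie L1 n)) (quot L2 (upper_lie L2 n)) \<eta> \<and>
     alg_iso (restrict_alg L1 (lower_lie L1 (Suc n))) (restrict_alg L2 (lower_lie L2 (Suc n))) \<xi> \<and>
     (\<forall>x y. (\<forall>i\<le>n. x i \<in> lcarrier L1 \<and> y i \<in> lcarrier L2 \<and>
              \<eta> (coset L1 (upper_lie L1 n) (x i)) = coset L2 (upper_lie L2 n) (y i))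
        \<longrightarrow> \<xi> (lie_word L1 x n) = lie_word L2 y n)"

definition lie_isoclinic :: "('k::field, 'a) lalg \<Rightarrow> ('k, 'b) lalg \<Rightarrow> nat \<Rightarrow> bool" where
  "lie_isoclinic L1 L2 n \<longleftrightarrow> (\<exists>\<eta> \<xi>. lie_isoclinism L1 L2 n \<eta> \<xi>)"

end

theory Submission
  imports Defs
begin

text \<open>
  \<open>K\<close> is the pullback of \<open>L1 \<rightarrow> L1/Z\<^sub>n(L1) \<cong> L2/Z\<^sub>n(L2) \<leftarrow> L2\<close>, hence a subalgebra of
  \<open>L1 \<oplus> L2\<close> whose coordinate projections are onto, with kernels \<open>Z\<^sub>2\<close> and \<open>Z\<^sub>1\<close>; this gives
  the isomorphisms of (d).

  The heart is (b). A priori \<open>\<xi>\<close> only respects Lie words of length \<open>n + 1\<close>, but then it also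
  respects all longer words, and the elements \<open>g \<in> \<gamma>\<^sub>n\<^sub>+\<^sub>1(L1)\<close> such that \<open>\<xi>\<close> respects every
  word starting with \<open>g\<close> form an ideal containing the words of length \<open>n + 1\<close>, i.e. all of
  \<open>\<gamma>\<^sub>n\<^sub>+\<^sub>1(L1)\<close>. As symmetrised brackets are annihilated from the left, for \<open>n > 0\<close> this gives
  \<open>\<xi> [g, a]\<^sub>l\<^sub>i\<^sub>e = [\<xi> g, b]\<^sub>l\<^sub>i\<^sub>e\<close> for \<open>(a, b) \<in> K\<close>, so the graph of \<open>\<xi>\<close> within \<open>K\<close> is an
  ideal of \<open>K\<close>; it contains the Lie words of \<open>K\<close> of length \<open>n + 1\<close>, hence \<open>\<gamma>\<^sub>n\<^sub>+\<^sub>1(K)\<close>, and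
  projecting to \<open>L1\<close> shows equality. Since \<open>\<xi>\<close> is injective, \<open>Z\<^sub>i\<close> meets this graph only in \<open>0\<close>.

  Finally, a quotient of \<open>A\<close> by an ideal meeting \<open>\<gamma>\<^sub>n\<^sub>+\<^sub>1(A)\<close> trivially is \<open>n\<close>-Lie-isoclinic
  to \<open>A\<close> as soon as the Lie words of length \<open>n + 1\<close> only depend on \<open>Z\<^sub>n(A)\<close>-cosets, and for
  \<open>A = K\<close> this follows from (b) and the isoclinism.
\<close>

section \<open>Arithmetic in Leibniz algebras\<close>

locale leibniz =
  fixes L :: "('k::field, 'a) lalg"
  assumes leibniz_algebra: "leibniz_algebra L"
begin

abbreviation "C \<equiv> lcarrier L"
abbreviation vadd (infixl "\<oplus>" 65) where "x \<oplus> y \<equiv> ladd L x y"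
abbreviation vsmult (infixr "\<cdot>" 70) where "c \<cdot> x \<equiv> lsmult L c x"
abbreviation vzero ("\<zero>") where "\<zero> \<equiv> lzero L"
abbreviation "br \<equiv> lbr L"
abbreviation "lie \<equiv> lie_br L"

lemma vector_space_str: "vector_space_str L"
  using leibniz_algebra unfolding leibniz_algebra_def by auto

lemma zero_closed [simp]: "\<zero> \<in> C"
  and add_closed [simp]: "x \<in> C \<Longrightarrow> y \<in> C \<Longrightarrow> x \<oplus> y \<in> C"
  and smult_closed [simp]: "x \<in> C \<Longrightarrow> c \<cdot> x \<in> C"
  and add_assoc: "x \<in> C \<Longrightarrow> y \<in> C \<Longrightarrow> z \<in> C \<Longrightarrow> x \<oplus> y \<oplus> z = x \<oplus> (y \<oplus> z)"
  and add_commute: "x \<in> C \<Longrightarrow> y \<in> C \<Longrightarrow> x \<oplus> y = y \<oplus> x"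
  and add_zero [simp]: "x \<in> C \<Longrightarrow> x \<oplus> \<zero> = x"
  and smult_add: "x \<in> C \<Longrightarrow> y \<in> C \<Longrightarrow> c \<cdot> (x \<oplus> y) = c \<cdot> x \<oplus> c \<cdot> y"
  and add_smult: "x \<in> C \<Longrightarrow> (c + d) \<cdot> x = c \<cdot> x \<oplus> d \<cdot> x"
  and smult_smult: "x \<in> C \<Longrightarrow> (c * d) \<cdot> x = c \<cdot> (d \<cdot> x)"
  and one_smult [simp]: "x \<in> C \<Longrightarrow> 1 \<cdot> x = x"
  using vector_space_str unfolding vector_space_str_def by auto

lemma ex_neg: "x \<in> C \<Longrightarrow> \<exists>y\<in>C. x \<oplus> y = \<zero>"
  using vector_space_str unfolding vector_space_str_def by blast

lemma br_closed [simp]: "x \<in> C \<Longrightarrow> y \<in> C \<Longrightarrow> br x y \<in> C"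
  and br_linear: "x \<in> C \<Longrightarrow> y \<in> C \<Longrightarrow> z \<in> C \<Longrightarrow>
     br (c \<cdot> x \<oplus> d \<cdot> y) z = c \<cdot> br x z \<oplus> d \<cdot> br y z \<and> br z (c \<cdot> x \<oplus> d \<cdot> y) = c \<cdot> br z x \<oplus> d \<cdot> br z y"
  and leibniz_identity_sub: "x \<in> C \<Longrightarrow> y \<in> C \<Longrightarrow> z \<in> C \<Longrightarrow>
     br x (br y z) = lsub L (br (br x y) z) (br (br x z) y)"
  using leibniz_algebra unfolding leibniz_algebra_def by auto

lemma lie_closed [simp]: "x \<in> C \<Longrightarrow> y \<in> C \<Longrightarrow> lie x y \<in> C"
  unfolding lie_br_def by simp

lemma zero_add [simp]: "x \<in> C \<Longrightarrow> \<zero> \<oplus> x = x"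
  using add_commute by simp

lemma add_left_commute: "x \<in> C \<Longrightarrow> y \<in> C \<Longrightarrow> z \<in> C \<Longrightarrow> x \<oplus> (y \<oplus> z) = y \<oplus> (x \<oplus> z)"
  by (metis add_assoc add_commute)

lemmas add_ac = add_assoc add_commute add_left_commute

lemma add_left_cancel:
  assumes "a \<in> C" "b \<in> C" "c \<in> C" "a \<oplus> b = a \<oplus> c"
  shows "b = c"
proof -
  obtain y where y: "y \<in> C" "a \<oplus> y = \<zero>"
    using ex_neg assms(1) by blast
  have "b = (y \<oplus> a) \<oplus> b" using y assms by (simp add: add_commute)
  also have "\<dots> = y \<oplus> (a \<oplus> c)" using assms y by (simp add: add_assoc)
  also have "\<dots> = c" using assms y by (simp add: add_commute flip: add_assoc)
  finally show ?thesis .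
qed

lemma add_eq_self_imp_zero: "a \<in> C \<Longrightarrow> b \<in> C \<Longrightarrow> a \<oplus> b = a \<Longrightarrow> b = \<zero>"
  using add_left_cancel[of a b \<zero>] by simp

lemma zero_smult [simp]: "x \<in> C \<Longrightarrow> 0 \<cdot> x = \<zero>"
  using add_eq_self_imp_zero[of "0 \<cdot> x" "0 \<cdot> x"] add_smult[of x 0 0] by simp

lemma smult_zero [simp]: "c \<cdot> \<zero> = \<zero>"
  using smult_smult[of \<zero> c 0] by simp

lemma add_neg [simp]: "x \<in> C \<Longrightarrow> x \<oplus> (-1) \<cdot> x = \<zero>"
  using add_smult[of x 1 "-1"] by simp

lemma neg_add [simp]: "x \<in> C \<Longrightarrow> (-1) \<cdot> x \<oplus> x = \<zero>"
  using add_neg add_commute by (metis smult_closed)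

lemma neg_add_cancel_left [simp]: "x \<in> C \<Longrightarrow> y \<in> C \<Longrightarrow> (-1) \<cdot> x \<oplus> (x \<oplus> y) = y"
  and add_neg_cancel_left [simp]: "x \<in> C \<Longrightarrow> y \<in> C \<Longrightarrow> x \<oplus> ((-1) \<cdot> x \<oplus> y) = y"
  by (simp_all flip: add_assoc)

lemma br_add_left: "x \<in> C \<Longrightarrow> y \<in> C \<Longrightarrow> z \<in> C \<Longrightarrow> br (x \<oplus> y) z = br x z \<oplus> br y z"
  and br_add_right: "x \<in> C \<Longrightarrow> y \<in> C \<Longrightarrow> z \<in> C \<Longrightarrow> br z (x \<oplus> y) = br z x \<oplus> br z y"
  using br_linear[of x y z 1 1] by simp_all

lemma br_smult_left: "x \<in> C \<Longrightarrow> z \<in> C \<Longrightarrow> br (c \<cdot> x) z = c \<cdot> br x z"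
  and br_smult_right: "x \<in> C \<Longrightarrow> z \<in> C \<Longrightarrow> br z (c \<cdot> x) = c \<cdot> br z x"
  using br_linear[of x \<zero> z c 0] by simp_all

lemma br_zero_left [simp]: "z \<in> C \<Longrightarrow> br \<zero> z = \<zero>"
  and br_zero_right [simp]: "z \<in> C \<Longrightarrow> br z \<zero> = \<zero>"
  using br_smult_left[of \<zero> z 0] br_smult_right[of \<zero> z 0] by simp_all

lemma leibniz_identity:
  "x \<in> C \<Longrightarrow> y \<in> C \<Longrightarrow> z \<in> C \<Longrightarrow> br x (br y z) \<oplus> br (br x z) y = br (br x y) z"
  using leibniz_identity_sub[of x y z] unfolding lsub_def by (simp add: add_assoc)

lemma lie_def: "lie x y = br x y \<oplus> br y x"
  unfolding lie_br_def ..

lemma lie_add_left: "x \<in> C \<Longrightarrow> y \<in> C \<Longrightarrow> z \<in> C \<Longrightarrow> lie (x \<oplus> y) z = lie x z \<oplus> lie y z"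
  unfolding lie_def by (simp add: br_add_left br_add_right add_ac)

lemma lie_smult_left: "x \<in> C \<Longrightarrow> z \<in> C \<Longrightarrow> lie (c \<cdot> x) z = c \<cdot> lie x z"
  unfolding lie_def by (simp add: br_smult_left br_smult_right smult_add)

lemma lie_zero_left [simp]: "z \<in> C \<Longrightarrow> lie \<zero> z = \<zero>"
  unfolding lie_def by simp

lemma br_lie_eq_zero:
  assumes "a \<in> C" "b \<in> C" "c \<in> C"
  shows "br c (lie a b) = \<zero>"
proof -
  let ?u = "br (br c a) b \<oplus> br (br c b) a"
  have "(br c (br a b) \<oplus> br c (br b a)) \<oplus> ?u
      = (br c (br a b) \<oplus> br (br c b) a) \<oplus> (br c (br b a) \<oplus> br (br c a) b)"
    using assms by (simp add: add_ac)
  also have "\<dots> = ?u"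
    using assms leibniz_identity[of c a b] leibniz_identity[of c b a] by (simp add: add_commute)
  finally have "br c (br a b) \<oplus> br c (br b a) = \<zero>"
    using assms add_eq_self_imp_zero[of ?u] by (simp add: add_commute)
  then show ?thesis
    using assms by (simp add: lie_def br_add_right)
qed

end

section \<open>Ideals and the Lie-central series\<close>

definition lie_centralizer :: "('k::field, 'a) lalg \<Rightarrow> 'a set \<Rightarrow> 'a set" where
  "lie_centralizer L J = {m \<in> lcarrier L. \<forall>y\<in>lcarrier L. lie_br L m y \<in> J}"

definition left_annihilator :: "('k::field, 'a) lalg \<Rightarrow> 'a set" where
  "left_annihilator L = {g \<in> lcarrier L. \<forall>x\<in>lcarrier L. lbr L x g = lzero L}"

lemma upper_lie_Suc_lie_centralizer: "upper_lie L (Suc i) = lie_centralizer L (upper_lie L i)"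
  unfolding lie_centralizer_def by simp

context leibniz
begin

lemma subspace_subset: "subspace L J \<Longrightarrow> J \<subseteq> C"
  and subspace_zero: "subspace L J \<Longrightarrow> \<zero> \<in> J"
  and subspace_add: "subspace L J \<Longrightarrow> x \<in> J \<Longrightarrow> y \<in> J \<Longrightarrow> x \<oplus> y \<in> J"
  and subspace_smult: "subspace L J \<Longrightarrow> x \<in> J \<Longrightarrow> c \<cdot> x \<in> J"
  unfolding subspace_def by auto

lemma subspace_add_cancel:
  assumes J: "subspace L J" and "u \<in> C" "v \<in> J" "u \<oplus> v \<in> J"
  shows "u \<in> J"
proof -
  have "u = (u \<oplus> v) \<oplus> (-1) \<cdot> v"
    using assms subspace_subset[OF J] by (auto simp: add_assoc)
  then show ?thesis
    using assms by (metis subspace_add subspace_smult)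
qed

lemma idealI:
  assumes "J \<subseteq> C" "\<zero> \<in> J" "\<And>x y. x \<in> J \<Longrightarrow> y \<in> J \<Longrightarrow> x \<oplus> y \<in> J"
    "\<And>c x. x \<in> J \<Longrightarrow> c \<cdot> x \<in> J"
    "\<And>x i. x \<in> C \<Longrightarrow> i \<in> J \<Longrightarrow> br x i \<in> J" "\<And>x i. x \<in> C \<Longrightarrow> i \<in> J \<Longrightarrow> br i x \<in> J"
  shows "ideal L J"
  unfolding ideal_def subspace_def by (intro conjI ballI allI assms)

lemma ideal_subspace: "ideal L J \<Longrightarrow> subspace L J"
  and ideal_br_left: "ideal L J \<Longrightarrow> x \<in> C \<Longrightarrow> i \<in> J \<Longrightarrow> br x i \<in> J"
  and ideal_br_right: "ideal L J \<Longrightarrow> x \<in> C \<Longrightarrow> i \<in> J \<Longrightarrow> br i x \<in> J"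
  unfolding ideal_def by auto

lemma ideal_subset: "ideal L J \<Longrightarrow> J \<subseteq> C"
  and ideal_zero: "ideal L J \<Longrightarrow> \<zero> \<in> J"
  and ideal_add: "ideal L J \<Longrightarrow> x \<in> J \<Longrightarrow> y \<in> J \<Longrightarrow> x \<oplus> y \<in> J"
  and ideal_smult: "ideal L J \<Longrightarrow> x \<in> J \<Longrightarrow> c \<cdot> x \<in> J"
  using ideal_subspace subspace_subset subspace_zero subspace_add subspace_smult by metis+

lemma ideal_lie_left: "ideal L J \<Longrightarrow> x \<in> C \<Longrightarrow> i \<in> J \<Longrightarrow> lie i x \<in> J"
  unfolding lie_def by (meson ideal_br_left ideal_br_right ideal_add)

lemma ideal_carrier: "ideal L C"
  by (rule idealI) auto

lemma subalgebra_ideal: "ideal L I \<Longrightarrow> subalgebra L I"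
  unfolding ideal_def subalgebra_def subspace_def by blast

lemma ideal_Inter:
  assumes "F \<noteq> {}" "\<And>I. I \<in> F \<Longrightarrow> ideal L I"
  shows "ideal L (\<Inter>F)"
proof (rule idealI)
  show "\<Inter>F \<subseteq> C" using assms ideal_subset by blast
  show "\<zero> \<in> \<Inter>F" using assms(2) ideal_zero by blast
  show "x \<oplus> y \<in> \<Inter>F" if "x \<in> \<Inter>F" "y \<in> \<Inter>F" for x y
    using that assms(2) ideal_add by blast
  show "c \<cdot> x \<in> \<Inter>F" if "x \<in> \<Inter>F" for c x
    using that assms(2) ideal_smult by blast
  show "br x i \<in> \<Inter>F" "br i x \<in> \<Inter>F" if "x \<in> C" "i \<in> \<Inter>F" for x i
    using that assms(2) ideal_br_left ideal_br_right by blast+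
qed

lemma ideal_ideal_gen: "X \<subseteq> C \<Longrightarrow> ideal L (ideal_gen L X)"
  unfolding ideal_gen_def using ideal_carrier by (intro ideal_Inter) auto

lemma ideal_gen_superset: "X \<subseteq> ideal_gen L X"
  unfolding ideal_gen_def by auto

lemma ideal_gen_least: "ideal L J \<Longrightarrow> X \<subseteq> J \<Longrightarrow> ideal_gen L X \<subseteq> J"
  unfolding ideal_gen_def by auto

text \<open>This identity makes the Lie-centralizer of an ideal closed under left multiplication.\<close>
lemma lie_br_exchange:
  assumes "z \<in> C" "m \<in> C" "y \<in> C"
  shows "lie (br z m) y \<oplus> br (lie m y) z = br (lie m z) y \<oplus> lie m (br y z)"
proof -
  have yzm: "br y (br z m) \<oplus> br (br y m) z = br (br y z) m"
    and myz: "br m (br y z) \<oplus> br (br m z) y = br (br m y) z"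
    using leibniz_identity assms by auto
  have "lie (br z m) y \<oplus> br (lie m y) z =
      (br (br z m) y \<oplus> br y (br z m)) \<oplus> (br (br m y) z \<oplus> br (br y m) z)"
    using assms by (simp add: lie_def br_add_left)
  also have "\<dots> = br (br z m) y \<oplus> (br y (br z m) \<oplus> br (br y m) z) \<oplus> br (br m y) z"
    using assms by (simp add: add_ac)
  also have "\<dots> = br (br z m) y \<oplus> (br m (br y z) \<oplus> br (br m z) y) \<oplus> br (br y z) m"
    using assms by (simp add: yzm flip: myz) (simp add: add_ac)
  also have "\<dots> = br (lie m z) y \<oplus> lie m (br y z)"
    using assms by (simp add: lie_def br_add_left add_ac)
  finally show ?thesis .
qed

lemma ideal_lie_centralizer:
  assumes J: "ideal L J"
  shows "ideal L (lie_centralizer L J)"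
proof -
  have left: "br z m \<in> lie_centralizer L J" if z: "z \<in> C" and m: "m \<in> lie_centralizer L J" for z m
  proof -
    have mC: "m \<in> C" and mJ: "\<And>y. y \<in> C \<Longrightarrow> lie m y \<in> J"
      using m unfolding lie_centralizer_def by auto
    have "lie (br z m) y \<in> J" if y: "y \<in> C" for y
    proof (rule subspace_add_cancel[OF ideal_subspace[OF J]])
      show "br (lie m y) z \<in> J" using ideal_br_right[OF J z mJ[OF y]] .
      show "lie (br z m) y \<oplus> br (lie m y) z \<in> J"
        unfolding lie_br_exchange[OF z mC y]
        using J mJ y z mC by (intro ideal_add ideal_br_right) auto
    qed (use z mC y in simp)
    then show ?thesis unfolding lie_centralizer_def using z mC by auto
  qed
  have right: "br m z \<in> lie_centralizer L J" if z: "z \<in> C" and m: "m \<in> lie_centralizer L J" for z m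
  proof -
    have mC: "m \<in> C" and mJ: "\<And>y. y \<in> C \<Longrightarrow> lie m y \<in> J"
      using m unfolding lie_centralizer_def by auto
    have "lie (br m z) y \<in> J" if y: "y \<in> C" for y
    proof (rule subspace_add_cancel[OF ideal_subspace[OF J]])
      show "lie (br z m) y \<in> J" using left[OF z m] y unfolding lie_centralizer_def by auto
      have "lie (br m z) y \<oplus> lie (br z m) y = lie (lie m z) y"
        using z mC y by (simp add: lie_def[of m z] lie_add_left)
      then show "lie (br m z) y \<oplus> lie (br z m) y \<in> J"
        using ideal_lie_left[OF J y mJ[OF z]] by simp
    qed (use z mC y in simp)
    then show ?thesis unfolding lie_centralizer_def using z mC by auto
  qed
  show ?thesis
  proof (rule idealI)
    show "x \<oplus> y \<in> lie_centralizer L J" if "x \<in> lie_centralizer L J" "y \<in> lie_centralizer L J" for x y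
      using that J unfolding lie_centralizer_def by (simp add: lie_add_left ideal_add)
    show "c \<cdot> x \<in> lie_centralizer L J" if "x \<in> lie_centralizer L J" for c x
      using that J unfolding lie_centralizer_def by (simp add: lie_smult_left ideal_smult)
    show "lie_centralizer L J \<subseteq> C" "\<zero> \<in> lie_centralizer L J"
      using J ideal_zero unfolding lie_centralizer_def by auto
  qed (fact left right)+
qed

lemma ideal_zero_set: "ideal L {\<zero>}"
  by (rule idealI) auto

lemma ideal_upper_lie: "ideal L (upper_lie L i)"
proof (induction i)
  case 0
  show ?case using ideal_zero_set by simp
next
  case (Suc i)
  then show ?case
    unfolding upper_lie_Suc_lie_centralizer by (rule ideal_lie_centralizer)
qed

lemma ideal_lower_lie: "ideal L (lower_lie L (Suc i))"
proof (induction i)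
  case 0
  then show ?case using ideal_carrier by simp
next
  case (Suc i)
  have "{lie m x | m x. m \<in> lower_lie L (Suc i) \<and> x \<in> C} \<subseteq> C"
    using ideal_subset[OF Suc.IH] by auto
  then show ?case by (simp add: lie_comm_def ideal_ideal_gen)
qed

lemma lower_lie_subset: "lower_lie L (Suc i) \<subseteq> C"
  by (rule ideal_subset[OF ideal_lower_lie])

lemma lie_in_lower_lie_Suc:
  assumes "m \<in> lower_lie L (Suc i)" "x \<in> C"
  shows "lie m x \<in> lower_lie L (Suc (Suc i))"
proof -
  have "lie m x \<in> {lie m x | m x. m \<in> lower_lie L (Suc i) \<and> x \<in> C}"
    using assms by blast
  then show ?thesis
    unfolding lower_lie.simps(3) lie_comm_def by (rule subsetD[OF ideal_gen_superset])
qed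

lemma lower_lie_Suc_subset: "lower_lie L (Suc (Suc i)) \<subseteq> lower_lie L (Suc i)"
  unfolding lower_lie.simps(3)[of L i] lie_comm_def
  using ideal_lie_left[OF ideal_lower_lie] by (intro ideal_gen_least[OF ideal_lower_lie]) blast

lemma lower_lie_antimono: "i \<le> j \<Longrightarrow> lower_lie L (Suc j) \<subseteq> lower_lie L (Suc i)"
proof (induction j rule: dec_induct)
  case (step j)
  then show ?case using lower_lie_Suc_subset[of j] by blast
qed simp

lemma ideal_left_annihilator: "ideal L (left_annihilator L)"
proof (rule idealI)
  fix z g assume z: "z \<in> C" and "g \<in> left_annihilator L"
  then have g: "g \<in> C" "\<And>x. x \<in> C \<Longrightarrow> br x g = \<zero>"
    unfolding left_annihilator_def by auto
  have "br x (br z g) = \<zero>" if "x \<in> C" for x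
    using leibniz_identity[of x z g] that z g by simp
  then show "br z g \<in> left_annihilator L"
    unfolding left_annihilator_def using z g by auto
  have "br x (br g z) = \<zero>" if "x \<in> C" for x
    using leibniz_identity[of x g z] that z g by simp
  then show "br g z \<in> left_annihilator L"
    unfolding left_annihilator_def using z g by auto
qed (auto simp: left_annihilator_def br_add_right br_smult_right)

lemma lower_lie_2_subset_left_annihilator: "lower_lie L (Suc (Suc 0)) \<subseteq> left_annihilator L"
  unfolding lower_lie.simps lie_comm_def
  by (rule ideal_gen_least[OF ideal_left_annihilator])
    (auto simp: left_annihilator_def br_lie_eq_zero)

lemma br_lower_lie_eq_zero:
  assumes "0 < n" "g \<in> lower_lie L (Suc n)" "x \<in> C"
  shows "br x g = \<zero>"
  using assms lower_lie_antimono[of 1 n] lower_lie_2_subset_left_annihilator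
  unfolding left_annihilator_def by auto

end

section \<open>Lie words\<close>

lemma lie_word_cong: "(\<And>i. i \<le> k \<Longrightarrow> x i = y i) \<Longrightarrow> lie_word L x k = lie_word L y k"
  by (induction k) auto

lemma lie_word_Suc_collapse:
  "lie_word L x (Suc k) = lie_word L (\<lambda>i. if i = 0 then lie_br L (x 0) (x 1) else x (Suc i)) k"
  (is "_ = lie_word L ?y k")
proof (induction k)
  case (Suc k)
  have "lie_word L x (Suc (Suc k)) = lie_br L (lie_word L x (Suc k)) (x (Suc (Suc k)))"
    by (rule lie_word.simps(2))
  also have "\<dots> = lie_br L (lie_word L ?y k) (?y (Suc k))"
    unfolding Suc.IH by simp
  also have "\<dots> = lie_word L ?y (Suc k)"
    by (rule lie_word.simps(2)[symmetric])
  finally show ?case .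
qed simp

lemma lie_word_append:
  "lie_word L (z(0 := lie_word L x n)) m = lie_word L (\<lambda>i. if i \<le> n then x i else z (i - n)) (n + m)"
  (is "_ = lie_word L ?y (n + m)")
proof (induction m)
  case 0
  show ?case by simp (rule lie_word_cong, simp)
next
  case (Suc m)
  have "lie_word L (z(0 := lie_word L x n)) (Suc m)
      = lie_br L (lie_word L (z(0 := lie_word L x n)) m) (z (Suc m))"
    by simp
  also have "\<dots> = lie_br L (lie_word L ?y (n + m)) (z (Suc m))"
    by (simp only: Suc.IH)
  also have "\<dots> = lie_word L ?y (n + Suc m)"
    by (simp add: Suc_diff_le)
  finally show ?case .
qed

definition lie_words :: "('k::field, 'a) lalg \<Rightarrow> nat \<Rightarrow> 'a set" where
  "lie_words L k = {lie_word L x k | x. \<forall>i\<le>k. x i \<in> lcarrier L}"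

context leibniz
begin

lemma lie_word_closed: "(\<forall>i\<le>k. x i \<in> C) \<Longrightarrow> lie_word L x k \<in> C"
  by (induction k) auto

lemma lie_word_in_lower_lie: "(\<forall>i\<le>k. x i \<in> C) \<Longrightarrow> lie_word L x k \<in> lower_lie L (Suc k)"
proof (induction k)
  case (Suc k)
  then show ?case using lie_in_lower_lie_Suc[of "lie_word L x k" k "x (Suc k)"] by simp
qed simp

lemma lie_words_subset: "lie_words L k \<subseteq> C"
  unfolding lie_words_def using lie_word_closed by auto

text \<open>Induction on \<open>k\<close>: the words of length \<open>k + 1\<close> lie in the Lie-centralizer of the ideal
  generated by the words of length \<open>k + 2\<close>, and this centralizer is an ideal.\<close>
lemma lower_lie_subset_ideal_gen_lie_words: "lower_lie L (Suc k) \<subseteq> ideal_gen L (lie_words L k)"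
proof (induction k)
  case 0
  have "C \<subseteq> lie_words L 0"
    unfolding lie_words_def by (auto intro!: exI[of _ "\<lambda>_. _"])
  then show ?case using ideal_gen_superset by fastforce
next
  case (Suc k)
  let ?J = "ideal_gen L (lie_words L (Suc k))"
  have J: "ideal L ?J" using ideal_ideal_gen[OF lie_words_subset] .
  have "lie_words L k \<subseteq> lie_centralizer L ?J"
  proof
    fix w assume "w \<in> lie_words L k"
    then obtain x where x: "\<forall>i\<le>k. x i \<in> C" "w = lie_word L x k"
      unfolding lie_words_def by auto
    have "lie w y \<in> ?J" if y: "y \<in> C" for y
    proof -
      have "lie w y = lie_word L (x(Suc k := y)) (Suc k)"
        using x lie_word_cong[of k x "x(Suc k := y)" L] by simp
      also have "\<dots> \<in> lie_words L (Suc k)"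
        unfolding lie_words_def using x y by (auto intro!: exI[of _ "x(Suc k := y)"])
      finally show ?thesis using ideal_gen_superset by blast
    qed
    then show "w \<in> lie_centralizer L ?J"
      unfolding lie_centralizer_def using x lie_word_closed by auto
  qed
  then have "ideal_gen L (lie_words L k) \<subseteq> lie_centralizer L ?J"
    by (rule ideal_gen_least[OF ideal_lie_centralizer[OF J]])
  with Suc.IH have "lower_lie L (Suc k) \<subseteq> lie_centralizer L ?J" by blast
  then show ?case
    unfolding lower_lie.simps(3) lie_comm_def
    by (intro ideal_gen_least[OF J]) (auto simp: lie_centralizer_def)
qed

lemma lie_word_head_closed:
  "\<forall>i. 0 < i \<and> i \<le> k \<longrightarrow> z i \<in> C \<Longrightarrow> a \<in> C \<Longrightarrow> lie_word L (z(0 := a)) k \<in> C"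
  by (rule lie_word_closed) auto

lemma lie_word_head_Suc:
  "lie_word L (z(0 := a)) (Suc k) = lie (lie_word L (z(0 := a)) k) (z (Suc k))"
  by simp

lemma lie_word_head_add:
  assumes "\<forall>i. 0 < i \<and> i \<le> k \<longrightarrow> z i \<in> C" "a \<in> C" "b \<in> C"
  shows "lie_word L (z(0 := a \<oplus> b)) k = lie_word L (z(0 := a)) k \<oplus> lie_word L (z(0 := b)) k"
  using assms(1)
proof (induction k)
  case (Suc k)
  then have z: "\<forall>i. 0 < i \<and> i \<le> k \<longrightarrow> z i \<in> C" "z (Suc k) \<in> C" by simp_all
  show ?case
    unfolding lie_word_head_Suc Suc.IH[OF z(1)]
    using lie_add_left[OF lie_word_head_closed[OF z(1) assms(2)]
        lie_word_head_closed[OF z(1) assms(3)] z(2)] .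
qed simp

lemma lie_word_head_smult:
  assumes "\<forall>i. 0 < i \<and> i \<le> k \<longrightarrow> z i \<in> C" "a \<in> C"
  shows "lie_word L (z(0 := c \<cdot> a)) k = c \<cdot> lie_word L (z(0 := a)) k"
  using assms(1)
proof (induction k)
  case (Suc k)
  then have z: "\<forall>i. 0 < i \<and> i \<le> k \<longrightarrow> z i \<in> C" "z (Suc k) \<in> C" by simp_all
  show ?case
    unfolding lie_word_head_Suc Suc.IH[OF z(1)]
    using lie_smult_left[OF lie_word_head_closed[OF z(1) assms(2)] z(2)] .
qed simp

lemma lie_word_head_zero: "\<forall>i. 0 < i \<and> i \<le> k \<longrightarrow> z i \<in> C \<Longrightarrow> lie_word L (z(0 := \<zero>)) k = \<zero>"
  by (induction k) auto

lemma lie_word_head_in_ideal: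
  assumes J: "ideal L J" and "g \<in> J" "\<forall>i. 0 < i \<and> i \<le> k \<longrightarrow> z i \<in> C"
  shows "lie_word L (z(0 := g)) k \<in> J"
  using assms(2,3) by (induction k) (auto intro: ideal_lie_left[OF J])

end

section \<open>Homomorphisms, subalgebras, direct sums and quotients\<close>

lemma alg_hom_closed: "alg_hom A B f \<Longrightarrow> x \<in> lcarrier A \<Longrightarrow> f x \<in> lcarrier B"
  and alg_hom_add:
    "alg_hom A B f \<Longrightarrow> x \<in> lcarrier A \<Longrightarrow> y \<in> lcarrier A \<Longrightarrow> f (ladd A x y) = ladd B (f x) (f y)"
  and alg_hom_br:
    "alg_hom A B f \<Longrightarrow> x \<in> lcarrier A \<Longrightarrow> y \<in> lcarrier A \<Longrightarrow> f (lbr A x y) = lbr B (f x) (f y)"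
  and alg_hom_smult: "alg_hom A B f \<Longrightarrow> x \<in> lcarrier A \<Longrightarrow> f (lsmult A c x) = lsmult B c (f x)"
  unfolding alg_hom_def by auto

lemma alg_hom_comp: "alg_hom A B f \<Longrightarrow> alg_hom B D g \<Longrightarrow> alg_hom A D (g \<circ> f)"
  unfolding alg_hom_def by (auto simp: image_subset_iff)

lemma alg_hom_zero:
  assumes "leibniz A" "leibniz B" "alg_hom A B f"
  shows "f (lzero A) = lzero B"
proof -
  interpret A: leibniz A by fact
  interpret B: leibniz B by fact
  have "f (lzero A) = f (lsmult A 0 (lzero A))" by simp
  also have "\<dots> = lsmult B 0 (f (lzero A))" by (rule alg_hom_smult[OF assms(3) A.zero_closed])
  also have "\<dots> = lzero B" using alg_hom_closed[OF assms(3)] by simp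
  finally show ?thesis .
qed

lemma alg_hom_lie_br:
  "leibniz A \<Longrightarrow> alg_hom A B f \<Longrightarrow> x \<in> lcarrier A \<Longrightarrow> y \<in> lcarrier A \<Longrightarrow>
    f (lie_br A x y) = lie_br B (f x) (f y)"
  unfolding lie_br_def by (simp add: alg_hom_add alg_hom_br leibniz.br_closed)

lemma alg_hom_lie_word:
  assumes A: "leibniz A" and f: "alg_hom A B f" and x: "\<forall>i\<le>k. x i \<in> lcarrier A"
  shows "f (lie_word A x k) = lie_word B (\<lambda>i. f (x i)) k"
  using x
proof (induction k)
  case (Suc k)
  then show ?case
    using leibniz.lie_word_closed[OF A, of k x] alg_hom_lie_br[OF A f] by simp
qed simp

lemma leibniz_image:
  assumes A: "leibniz A" and f: "alg_hom A B f" and onto: "f ` lcarrier A = lcarrier B"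
    and zero: "f (lzero A) = lzero B"
  shows "leibniz B"
proof -
  interpret A: leibniz A by fact
  have ball: "(\<forall>x\<in>lcarrier B. P x) \<longleftrightarrow> (\<forall>a\<in>lcarrier A. P (f a))" for P
    unfolding onto[symmetric] by auto
  have bex: "(\<exists>x\<in>lcarrier B. P x) \<longleftrightarrow> (\<exists>a\<in>lcarrier A. P (f a))" for P
    unfolding onto[symmetric] by auto
  have neg: "\<exists>b\<in>lcarrier A. ladd B (f a) (f b) = lzero B" if "a \<in> lcarrier A" for a
    using that zero by (intro bexI[of _ "lsmult A (-1) a"]) (simp_all flip: alg_hom_add[OF f])
  show ?thesis
    unfolding leibniz_def leibniz_algebra_def vector_space_str_def lsub_def ball bex
    using neg zero[symmetric] A.zero_closed
    by (simp add: alg_hom_closed[OF f] flip: alg_hom_add[OF f] alg_hom_smult[OF f] alg_hom_br[OF f])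
      (simp add: A.add_ac A.smult_add A.add_smult A.smult_smult A.br_linear
        A.leibniz_identity_sub[unfolded lsub_def])
qed

lemma restrict_alg_simps [simp]:
  "lcarrier (restrict_alg A S) = S" "ladd (restrict_alg A S) = ladd A"
  "lzero (restrict_alg A S) = lzero A" "lsmult (restrict_alg A S) = lsmult A"
  "lbr (restrict_alg A S) = lbr A"
  unfolding restrict_alg_def by simp_all

lemma lie_br_restrict_alg [simp]: "lie_br (restrict_alg A S) = lie_br A"
  unfolding lie_br_def[abs_def] by simp

lemma lie_word_restrict_alg [simp]: "lie_word (restrict_alg A S) x k = lie_word A x k"
  by (induction k) simp_all

lemma leibniz_restrict_alg:
  assumes A: "leibniz A" and S: "subalgebra A S"
  shows "leibniz (restrict_alg A S)"
proof -
  interpret A: leibniz A by fact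
  have S: "\<And>x. x \<in> S \<Longrightarrow> x \<in> lcarrier A" "lzero A \<in> S"
    "\<And>x y. x \<in> S \<Longrightarrow> y \<in> S \<Longrightarrow> ladd A x y \<in> S" "\<And>c x. x \<in> S \<Longrightarrow> lsmult A c x \<in> S"
    "\<And>x y. x \<in> S \<Longrightarrow> y \<in> S \<Longrightarrow> lbr A x y \<in> S"
    using S unfolding subalgebra_def subspace_def by auto
  have neg: "\<exists>y\<in>S. ladd A x y = lzero A" if "x \<in> S" for x
    using that S by (intro bexI[of _ "lsmult A (-1) x"]) auto
  show ?thesis
    unfolding leibniz_def leibniz_algebra_def vector_space_str_def lsub_def restrict_alg_simps
    using neg S(2-5)
    by (simp add: S(1) A.add_ac A.smult_add A.add_smult A.smult_smult A.br_linear
        A.leibniz_identity_sub[unfolded lsub_def])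
qed

lemma dsum_simps [simp]:
  "lcarrier (dsum A B) = lcarrier A \<times> lcarrier B"
  "ladd (dsum A B) (a, b) (c, d) = (ladd A a c, ladd B b d)"
  "lzero (dsum A B) = (lzero A, lzero B)"
  "lsmult (dsum A B) k (a, b) = (lsmult A k a, lsmult B k b)"
  "lbr (dsum A B) (a, b) (c, d) = (lbr A a c, lbr B b d)"
  unfolding dsum_def by simp_all

lemma lie_br_dsum [simp]: "lie_br (dsum A B) (a, b) (c, d) = (lie_br A a c, lie_br B b d)"
  unfolding lie_br_def by simp

lemma lie_word_dsum:
  "lie_word (dsum A B) x k = (lie_word A (fst \<circ> x) k, lie_word B (snd \<circ> x) k)"
proof (induction k)
  case (Suc k)
  then show ?case by (cases "x (Suc k)") simp
qed simp

lemma leibniz_dsum: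
  assumes A: "leibniz A" and B: "leibniz B"
  shows "leibniz (dsum A B)"
proof -
  interpret A: leibniz A by fact
  interpret B: leibniz B by fact
  have neg: "(\<forall>x\<in>lcarrier (dsum A B). \<exists>y\<in>lcarrier (dsum A B).
      ladd (dsum A B) x y = lzero (dsum A B)) = True"
    by (auto intro: A.ex_neg B.ex_neg)
  show ?thesis
    unfolding leibniz_def leibniz_algebra_def vector_space_str_def lsub_def neg
    by (simp add: split_paired_all A.add_ac B.add_ac A.smult_add B.smult_add A.add_smult
        B.add_smult A.smult_smult B.smult_smult A.br_linear B.br_linear
        A.leibniz_identity_sub[unfolded lsub_def] B.leibniz_identity_sub[unfolded lsub_def])
qed

context leibniz
begin

lemma coset_memD: "a \<in> coset L I x \<Longrightarrow> \<exists>i\<in>I. a = x \<oplus> i"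
  and coset_memI: "i \<in> I \<Longrightarrow> x \<oplus> i \<in> coset L I x"
  unfolding coset_def by auto

lemma coset_self: "ideal L I \<Longrightarrow> x \<in> C \<Longrightarrow> x \<in> coset L I x"
  using coset_memI[of \<zero> I x] ideal_zero by simp

lemma coset_eq:
  assumes I: "ideal L I" and x: "x \<in> C" and a: "a \<in> coset L I x"
  shows "coset L I a = coset L I x"
proof -
  obtain i where i: "i \<in> I" "i \<in> C" "a = x \<oplus> i"
    using coset_memD[OF a] ideal_subset[OF I] by auto
  have "y \<in> coset L I x" if y: "y \<in> coset L I a" for y
  proof -
    obtain j where j: "j \<in> I" "j \<in> C" "y = a \<oplus> j"
      using coset_memD[OF y] ideal_subset[OF I] by auto
    then have "y = x \<oplus> (i \<oplus> j)" using i x by (simp add: add_assoc)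
    then show ?thesis using coset_memI ideal_add[OF I i(1) j(1)] by metis
  qed
  moreover have "y \<in> coset L I a" if y: "y \<in> coset L I x" for y
  proof -
    obtain j where j: "j \<in> I" "j \<in> C" "y = x \<oplus> j"
      using coset_memD[OF y] ideal_subset[OF I] by auto
    then have "y = a \<oplus> ((-1) \<cdot> i \<oplus> j)" using i x by (simp add: add_assoc)
    then show ?thesis using coset_memI ideal_add[OF I ideal_smult[OF I i(1)] j(1)] by metis
  qed
  ultimately show ?thesis by blast
qed

lemma coset_eq_iff: "ideal L I \<Longrightarrow> x \<in> C \<Longrightarrow> y \<in> C \<Longrightarrow> coset L I x = coset L I y \<longleftrightarrow> y \<in> coset L I x"
  using coset_eq coset_self by metis

lemma coset_eq_zero_iff:
  assumes I: "ideal L I" and x: "x \<in> C"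
  shows "coset L I x = coset L I \<zero> \<longleftrightarrow> x \<in> I"
proof -
  have "coset L I \<zero> = I"
    using ideal_subset[OF I] unfolding coset_def by force
  then show ?thesis using coset_eq_iff[OF I zero_closed x] by auto
qed

lemma coset_add:
  assumes I: "ideal L I" and x: "x \<in> C" and y: "y \<in> C"
    and "a \<in> coset L I x" "b \<in> coset L I y"
  shows "a \<oplus> b \<in> coset L I (x \<oplus> y)"
proof -
  obtain i j where ij: "i \<in> I" "j \<in> I" "a = x \<oplus> i" "b = y \<oplus> j"
    using coset_memD assms by metis
  have "i \<in> C" "j \<in> C" using ij ideal_subset[OF I] by auto
  then have "a \<oplus> b = (x \<oplus> y) \<oplus> (i \<oplus> j)" using ij x y by (simp add: add_ac)
  then show ?thesis using coset_memI ideal_add[OF I ij(1,2)] by metis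
qed

lemma coset_smult:
  assumes I: "ideal L I" and x: "x \<in> C" and "a \<in> coset L I x"
  shows "c \<cdot> a \<in> coset L I (c \<cdot> x)"
proof -
  obtain i where i: "i \<in> I" "a = x \<oplus> i" using coset_memD assms by metis
  have "i \<in> C" using i ideal_subset[OF I] by auto
  then have "c \<cdot> a = c \<cdot> x \<oplus> c \<cdot> i" using i x by (simp add: smult_add)
  then show ?thesis using coset_memI ideal_smult[OF I i(1)] by metis
qed

lemma coset_br:
  assumes I: "ideal L I" and x: "x \<in> C" and y: "y \<in> C"
    and "a \<in> coset L I x" "b \<in> coset L I y"
  shows "br a b \<in> coset L I (br x y)"
proof -
  obtain i j where ij: "i \<in> I" "j \<in> I" "a = x \<oplus> i" "b = y \<oplus> j"
    using coset_memD assms by metis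
  have ijC: "i \<in> C" "j \<in> C" using ij ideal_subset[OF I] by auto
  then have "br a b = br x y \<oplus> (br x j \<oplus> (br i y \<oplus> br i j))"
    using ij x y by (simp add: br_add_left br_add_right add_ac)
  moreover have "br x j \<oplus> (br i y \<oplus> br i j) \<in> I"
    using ij ijC x y I by (simp add: ideal_add ideal_br_left ideal_br_right)
  ultimately show ?thesis using coset_memI by metis
qed

lemma some_in_coset: "ideal L I \<Longrightarrow> x \<in> C \<Longrightarrow> (SOME a. a \<in> coset L I x) \<in> coset L I x"
  using coset_self by (rule someI)

lemma quot_carrier: "lcarrier (quot L I) = coset L I ` C"
  and quot_zero: "lzero (quot L I) = coset L I \<zero>"
  unfolding quot_def by simp_all

text \<open>The operations of \<open>quot\<close> act on arbitrary representatives chosen by \<open>SOME\<close>;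
  the coset lemmas above make the choice irrelevant.\<close>
lemma quot_add:
  assumes I: "ideal L I" and x: "x \<in> C" and y: "y \<in> C"
  shows "ladd (quot L I) (coset L I x) (coset L I y) = coset L I (x \<oplus> y)"
  unfolding quot_def
  using coset_eq[OF I _ coset_add[OF I x y some_in_coset[OF I x] some_in_coset[OF I y]]] x y
  by simp

lemma quot_smult:
  assumes I: "ideal L I" and x: "x \<in> C"
  shows "lsmult (quot L I) c (coset L I x) = coset L I (c \<cdot> x)"
  unfolding quot_def
  using coset_eq[OF I _ coset_smult[OF I x some_in_coset[OF I x]]] x
  by simp

lemma quot_br:
  assumes I: "ideal L I" and x: "x \<in> C" and y: "y \<in> C"
  shows "lbr (quot L I) (coset L I x) (coset L I y) = coset L I (br x y)"
  unfolding quot_def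
  using coset_eq[OF I _ coset_br[OF I x y some_in_coset[OF I x] some_in_coset[OF I y]]] x y
  by simp

lemma alg_hom_coset: "ideal L I \<Longrightarrow> alg_hom L (quot L I) (coset L I)"
  unfolding alg_hom_def by (simp add: quot_carrier quot_add quot_smult quot_br)

lemma leibniz_quot: "ideal L I \<Longrightarrow> leibniz (quot L I)"
  using leibniz_image[OF _ alg_hom_coset] quot_carrier quot_zero leibniz_axioms by metis

end

section \<open>The first isomorphism theorem and images of the central series\<close>

lemma alg_hom_eq_iff_coset_eq:
  assumes A: "leibniz A" and M: "leibniz M" and I: "ideal A I" and p: "alg_hom A M p"
    and ker: "\<And>x. x \<in> lcarrier A \<Longrightarrow> p x = lzero M \<longleftrightarrow> x \<in> I"
    and x: "x \<in> lcarrier A" and y: "y \<in> lcarrier A"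
  shows "p x = p y \<longleftrightarrow> coset A I x = coset A I y"
proof -
  interpret A: leibniz A by fact
  interpret M: leibniz M by fact
  let ?d = "ladd A y (lsmult A (-1) x)"
  have "p ?d = ladd M (p y) (lsmult M (-1) (p x))"
    using x y by (simp add: alg_hom_add[OF p] alg_hom_smult[OF p])
  then have "p x = p y \<longleftrightarrow> p ?d = lzero M"
    using x y alg_hom_closed[OF p] M.add_neg M.add_left_cancel[of "p x" _ "lzero M"]
    by (metis M.add_assoc M.add_commute M.add_zero M.neg_add M.smult_closed)
  also have "\<dots> \<longleftrightarrow> ?d \<in> I" using ker x y by simp
  also have "\<dots> \<longleftrightarrow> y \<in> coset A I x"
  proof
    assume "?d \<in> I"
    moreover have "y = ladd A x ?d" using x y by (simp add: A.add_left_commute[of x y])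
    ultimately show "y \<in> coset A I x" using A.coset_memI by metis
  next
    assume "y \<in> coset A I x"
    then obtain i where "i \<in> I" "y = ladd A x i" using A.coset_memD by blast
    moreover have "i \<in> lcarrier A" using calculation A.ideal_subset[OF I] by auto
    ultimately show "?d \<in> I" using x by (simp add: A.add_commute[of "ladd A x i"])
  qed
  also have "\<dots> \<longleftrightarrow> coset A I x = coset A I y" using A.coset_eq_iff[OF I x y] by simp
  finally show ?thesis .
qed

theorem quot_kernel_iso:
  assumes A: "leibniz A" and M: "leibniz M" and I: "ideal A I"
    and p: "alg_hom A M p" and onto: "p ` lcarrier A = lcarrier M"
    and ker: "\<And>x. x \<in> lcarrier A \<Longrightarrow> p x = lzero M \<longleftrightarrow> x \<in> I"
  shows "\<exists>\<phi>. alg_iso M (quot A I) \<phi> \<and> (\<forall>x\<in>lcarrier A. \<phi> (p x) = coset A I x)"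
proof -
  interpret A: leibniz A by fact
  note fibres = alg_hom_eq_iff_coset_eq[OF A M I p ker]
  define \<phi> where "\<phi> m = coset A I (SOME x. x \<in> lcarrier A \<and> p x = m)" for m
  have \<phi>p: "\<phi> (p x) = coset A I x" if x: "x \<in> lcarrier A" for x
  proof -
    have "(SOME y. y \<in> lcarrier A \<and> p y = p x) \<in> lcarrier A \<and> p (SOME y. y \<in> lcarrier A \<and> p y = p x) = p x"
      by (rule someI[of "\<lambda>y. y \<in> lcarrier A \<and> p y = p x" x]) (simp add: x)
    then show ?thesis unfolding \<phi>_def using fibres x by metis
  qed
  have ball: "(\<forall>m\<in>lcarrier M. P m) \<longleftrightarrow> (\<forall>x\<in>lcarrier A. P (p x))" for P
    unfolding onto[symmetric] by auto
  have hom: "alg_hom M (quot A I) \<phi>"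
    unfolding alg_hom_def image_subset_iff ball A.quot_carrier
    by (simp add: \<phi>p A.quot_add[OF I] A.quot_smult[OF I] A.quot_br[OF I]
        flip: alg_hom_add[OF p] alg_hom_smult[OF p] alg_hom_br[OF p])
  have "inj_on \<phi> (lcarrier M)"
    unfolding inj_on_def ball using \<phi>p fibres by simp
  moreover have "\<phi> ` lcarrier M = lcarrier (quot A I)"
    unfolding onto[symmetric] A.quot_carrier image_image using \<phi>p by simp
  ultimately show ?thesis
    unfolding alg_iso_def bij_betw_def using hom \<phi>p by blast
qed

lemma ideal_image:
  assumes A: "leibniz A" and B: "leibniz B" and f: "alg_hom A B f"
    and onto: "f ` lcarrier A = lcarrier B" and I: "ideal A I"
  shows "ideal B (f ` I)"
proof -
  interpret A: leibniz A by fact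
  interpret B: leibniz B by fact
  have IC: "\<And>x. x \<in> I \<Longrightarrow> x \<in> lcarrier A" using A.ideal_subset[OF I] by auto
  show ?thesis
  proof (rule B.idealI)
    show "f ` I \<subseteq> lcarrier B" using IC alg_hom_closed[OF f] by auto
    show "lzero B \<in> f ` I"
      using alg_hom_zero[OF A B f] A.ideal_zero[OF I] by (metis image_eqI)
    show "ladd B x y \<in> f ` I" if "x \<in> f ` I" "y \<in> f ` I" for x y
      using that IC A.ideal_add[OF I] by (auto simp flip: alg_hom_add[OF f])
    show "lsmult B c x \<in> f ` I" if "x \<in> f ` I" for c x
      using that IC A.ideal_smult[OF I] by (auto simp flip: alg_hom_smult[OF f])
    show "lbr B x i \<in> f ` I" "lbr B i x \<in> f ` I" if "x \<in> lcarrier B" "i \<in> f ` I" for x i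
      using that IC A.ideal_br_left[OF I] A.ideal_br_right[OF I]
      unfolding onto[symmetric] by (auto simp flip: alg_hom_br[OF f])
  qed
qed

lemma ideal_preimage:
  assumes A: "leibniz A" and B: "leibniz B" and f: "alg_hom A B f" and J: "ideal B J"
  shows "ideal A {x \<in> lcarrier A. f x \<in> J}"
proof -
  interpret A: leibniz A by fact
  interpret B: leibniz B by fact
  show ?thesis
    by (rule A.idealI)
      (auto simp: alg_hom_zero[OF A B f] alg_hom_add[OF f] alg_hom_smult[OF f] alg_hom_br[OF f]
        alg_hom_closed[OF f] B.ideal_zero[OF J] B.ideal_add[OF J] B.ideal_smult[OF J]
        B.ideal_br_left[OF J] B.ideal_br_right[OF J])
qed

lemma ideal_kernel:
  "leibniz A \<Longrightarrow> leibniz B \<Longrightarrow> alg_hom A B f \<Longrightarrow> ideal A {x \<in> lcarrier A. f x = lzero B}"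
  using ideal_preimage[OF _ _ _ leibniz.ideal_zero_set] by simp

lemma image_lower_lie:
  assumes A: "leibniz A" and B: "leibniz B" and f: "alg_hom A B f"
    and onto: "f ` lcarrier A = lcarrier B"
  shows "f ` lower_lie A (Suc i) = lower_lie B (Suc i)"
proof (induction i)
  case 0
  then show ?case using onto by simp
next
  case (Suc i)
  interpret A: leibniz A by fact
  interpret B: leibniz B by fact
  let ?GA = "{lie_br A m x | m x. m \<in> lower_lie A (Suc i) \<and> x \<in> lcarrier A}"
  let ?GB = "{lie_br B m x | m x. m \<in> lower_lie B (Suc i) \<and> x \<in> lcarrier B}"
  have GA: "?GA \<subseteq> lcarrier A" and GB: "?GB \<subseteq> lcarrier B"
    by (auto dest: subsetD[OF A.lower_lie_subset] subsetD[OF B.lower_lie_subset])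
  have f_GA: "f ` ?GA = ?GB"
  proof
    show "f ` ?GA \<subseteq> ?GB"
    proof
      fix w assume "w \<in> f ` ?GA"
      then obtain m x where mx: "m \<in> lower_lie A (Suc i)" "x \<in> lcarrier A" "w = f (lie_br A m x)"
        by blast
      then have "w = lie_br B (f m) (f x)"
        using alg_hom_lie_br[OF A f] subsetD[OF A.lower_lie_subset] by simp
      moreover have "f m \<in> lower_lie B (Suc i)" "f x \<in> lcarrier B"
        using mx Suc.IH alg_hom_closed[OF f] by auto
      ultimately show "w \<in> ?GB" by blast
    qed
    show "?GB \<subseteq> f ` ?GA"
    proof
      fix w assume "w \<in> ?GB"
      then obtain m x where mx: "m \<in> lower_lie B (Suc i)" "x \<in> lcarrier B" "w = lie_br B m x"
        by blast
      then obtain m' x' where m'x': "m' \<in> lower_lie A (Suc i)" "x' \<in> lcarrier A" "m = f m'" "x = f x'"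
        using Suc.IH onto by (metis imageE)
      then have "w = f (lie_br A m' x')"
        using mx alg_hom_lie_br[OF A f] subsetD[OF A.lower_lie_subset] by simp
      moreover have "lie_br A m' x' \<in> ?GA" using m'x' by blast
      ultimately show "w \<in> f ` ?GA" by blast
    qed
  qed
  have "ideal_gen A ?GA \<subseteq> {x \<in> lcarrier A. f x \<in> ideal_gen B ?GB}"
  proof (rule A.ideal_gen_least[OF ideal_preimage[OF A B f B.ideal_ideal_gen[OF GB]]])
    show "?GA \<subseteq> {x \<in> lcarrier A. f x \<in> ideal_gen B ?GB}"
      using GA f_GA B.ideal_gen_superset[of ?GB] by blast
  qed
  then have "f ` ideal_gen A ?GA \<subseteq> ideal_gen B ?GB" by blast
  moreover have "ideal_gen B ?GB \<subseteq> f ` ideal_gen A ?GA"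
  proof (rule B.ideal_gen_least[OF ideal_image[OF A B f onto A.ideal_ideal_gen[OF GA]]])
    show "?GB \<subseteq> f ` ideal_gen A ?GA"
      using f_GA A.ideal_gen_superset[of ?GA] by blast
  qed
  ultimately show ?case unfolding lower_lie.simps(3) lie_comm_def by blast
qed

lemma image_upper_lie_subset:
  assumes A: "leibniz A" and B: "leibniz B" and f: "alg_hom A B f"
    and onto: "f ` lcarrier A = lcarrier B"
  shows "f ` upper_lie A j \<subseteq> upper_lie B j"
proof (induction j)
  case 0
  then show ?case using alg_hom_zero[OF A B f] by simp
next
  case (Suc j)
  show ?case
  proof
    fix w assume "w \<in> f ` upper_lie A (Suc j)"
    then obtain x where x: "w = f x" "x \<in> lcarrier A" "\<forall>y\<in>lcarrier A. lie_br A x y \<in> upper_lie A j"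
      by auto
    then have "\<forall>y\<in>lcarrier A. lie_br B w (f y) \<in> upper_lie B j"
      using Suc.IH by (auto simp flip: alg_hom_lie_br[OF A f])
    then show "w \<in> upper_lie B (Suc j)"
      unfolding upper_lie.simps onto[symmetric] using x alg_hom_closed[OF f] by auto
  qed
qed

section \<open>Quotients by ideals meeting \<open>\<gamma>\<^sub>n\<^sub>+\<^sub>1\<close> trivially\<close>

lemma alg_hom_restrict_alg:
  "alg_hom A B f \<Longrightarrow> S \<subseteq> lcarrier A \<Longrightarrow> f ` S \<subseteq> T \<Longrightarrow> alg_hom (restrict_alg A S) (restrict_alg B T) f"
  unfolding alg_hom_def restrict_alg_simps by blast

lemma alg_iso_inv_into:
  assumes A: "leibniz A" and f: "alg_hom A B f" and bij: "bij_betw f (lcarrier A) (lcarrier B)"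
  shows "alg_iso B A (inv_into (lcarrier A) f)"
proof -
  interpret A: leibniz A by fact
  have onto: "f ` lcarrier A = lcarrier B" and inj: "inj_on f (lcarrier A)"
    using bij unfolding bij_betw_def by auto
  have ball: "(\<forall>b\<in>lcarrier B. P b) \<longleftrightarrow> (\<forall>a\<in>lcarrier A. P (f a))" for P
    unfolding onto[symmetric] by auto
  have "alg_hom B A (inv_into (lcarrier A) f)"
    unfolding alg_hom_def image_subset_iff ball
    by (simp add: inv_into_f_f[OF inj] flip: alg_hom_add[OF f] alg_hom_smult[OF f] alg_hom_br[OF f])
  then show ?thesis
    unfolding alg_iso_def using bij_betw_inv_into[OF bij] by simp
qed

context
  fixes A :: "('k::field, 'a) lalg" and N :: "'a set" and n :: nat
  assumes A: "leibniz A" and N: "ideal A N"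
    and N_inter: "N \<inter> lower_lie A (Suc n) \<subseteq> {lzero A}"
begin

interpretation A: leibniz A by (rule A)

lemma upper_lie_of_coset_in_upper_lie_quot:
  assumes "j \<le> n" "x \<in> lower_lie A (Suc (n - j))" "coset A N x \<in> upper_lie (quot A N) j"
  shows "x \<in> upper_lie A j"
  using assms
proof (induction j arbitrary: x)
  case 0
  then have "x \<in> N \<inter> lower_lie A (Suc n)"
    using A.coset_eq_zero_iff[OF N] A.lower_lie_subset A.quot_zero by auto
  then show ?case using N_inter by auto
next
  case (Suc j)
  have xC: "x \<in> lcarrier A" using Suc.prems(2) A.lower_lie_subset by blast
  have "lie_br A x y \<in> upper_lie A j" if y: "y \<in> lcarrier A" for y
  proof (rule Suc.IH)
    have "n - j = Suc (n - Suc j)" using Suc.prems(1) by simp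
    then show "lie_br A x y \<in> lower_lie A (Suc (n - j))"
      using A.lie_in_lower_lie_Suc Suc.prems(2) y by simp
    have "coset A N (lie_br A x y) = lie_br (quot A N) (coset A N x) (coset A N y)"
      using alg_hom_lie_br[OF A A.alg_hom_coset[OF N] xC y] .
    then show "coset A N (lie_br A x y) \<in> upper_lie (quot A N) j"
      using Suc.prems(3) y A.quot_carrier by simp
  qed (use Suc.prems(1) in simp)
  then show ?case using xC by simp
qed

lemma coset_in_upper_lie_quot_iff:
  "x \<in> lcarrier A \<Longrightarrow> coset A N x \<in> upper_lie (quot A N) n \<longleftrightarrow> x \<in> upper_lie A n"
  using upper_lie_of_coset_in_upper_lie_quot[of n x]
    image_upper_lie_subset[OF A A.leibniz_quot[OF N] A.alg_hom_coset[OF N] A.quot_carrier[symmetric]]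
  by auto

lemma inj_on_coset_lower_lie: "inj_on (coset A N) (lower_lie A (Suc n))"
proof
  fix a b assume a: "a \<in> lower_lie A (Suc n)" and b: "b \<in> lower_lie A (Suc n)"
    and eq: "coset A N a = coset A N b"
  have aC: "a \<in> lcarrier A" and bC: "b \<in> lcarrier A"
    using a b A.lower_lie_subset by blast+
  obtain i where i: "i \<in> N" "b = ladd A a i"
    using eq A.coset_eq_iff[OF N aC bC] A.coset_memD by blast
  have "i = ladd A (lsmult A (-1) a) b"
    using i aC A.ideal_subset[OF N] by auto
  also have "\<dots> \<in> lower_lie A (Suc n)"
    using a b A.ideal_lower_lie A.ideal_add A.ideal_smult by blast
  finally have "i = lzero A" using i N_inter by blast
  then show "a = b" using i aC by simp
qed

text \<open>\<open>\<eta>\<close> comes from the first isomorphism theorem for \<open>A \<rightarrow> A/N \<rightarrow> (A/N)/Z\<^sub>n(A/N)\<close>, and \<open>\<xi>\<close>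
  inverts the projection \<open>\<gamma>\<^sub>n\<^sub>+\<^sub>1(A) \<rightarrow> \<gamma>\<^sub>n\<^sub>+\<^sub>1(A/N)\<close>, which is injective as \<open>N \<inter> \<gamma>\<^sub>n\<^sub>+\<^sub>1(A) = 0\<close>.\<close>
theorem lie_isoclinic_quot:
  assumes words: "\<And>x y. \<forall>i\<le>n. x i \<in> lcarrier A \<and> y i \<in> lcarrier A \<and>
      coset A (upper_lie A n) (x i) = coset A (upper_lie A n) (y i) \<Longrightarrow> lie_word A x n = lie_word A y n"
  shows "lie_isoclinic (quot A N) A n"
proof -
  let ?Q = "quot A N" and ?\<pi> = "coset A N"
  let ?Z = "upper_lie A n" and ?ZQ = "upper_lie ?Q n"
  let ?G = "lower_lie A (Suc n)" and ?GQ = "lower_lie ?Q (Suc n)"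
  have Q: "leibniz ?Q" using A.leibniz_quot[OF N] .
  interpret Q: leibniz ?Q by (rule Q)
  have \<pi>: "alg_hom A ?Q ?\<pi>" using A.alg_hom_coset[OF N] .
  have \<pi>_onto: "?\<pi> ` lcarrier A = lcarrier ?Q" using A.quot_carrier ..
  let ?p = "coset ?Q ?ZQ \<circ> ?\<pi>"
  have "\<exists>\<eta>. alg_iso (quot ?Q ?ZQ) (quot A ?Z) \<eta> \<and> (\<forall>x\<in>lcarrier A. \<eta> (?p x) = coset A ?Z x)"
  proof (rule quot_kernel_iso[OF A Q.leibniz_quot[OF Q.ideal_upper_lie] A.ideal_upper_lie])
    show "alg_hom A (quot ?Q ?ZQ) ?p"
      using alg_hom_comp[OF \<pi> Q.alg_hom_coset[OF Q.ideal_upper_lie]] .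
    show "?p ` lcarrier A = lcarrier (quot ?Q ?ZQ)"
      unfolding Q.quot_carrier \<pi>_onto[symmetric] by (simp add: image_comp)
    show "?p x = lzero (quot ?Q ?ZQ) \<longleftrightarrow> x \<in> ?Z" if x: "x \<in> lcarrier A" for x
      using Q.coset_eq_zero_iff[OF Q.ideal_upper_lie alg_hom_closed[OF \<pi> x]]
        coset_in_upper_lie_quot_iff[OF x] alg_hom_zero[OF A Q \<pi>] Q.quot_zero by simp
  qed
  then obtain \<eta> where \<eta>: "alg_iso (quot ?Q ?ZQ) (quot A ?Z) \<eta>"
    and \<eta>_p: "\<And>x. x \<in> lcarrier A \<Longrightarrow> \<eta> (coset ?Q ?ZQ (?\<pi> x)) = coset A ?Z x"
    by auto
  have GA: "?G \<subseteq> lcarrier A" using A.lower_lie_subset .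
  have bij: "bij_betw ?\<pi> ?G ?GQ"
    unfolding bij_betw_def using inj_on_coset_lower_lie image_lower_lie[OF A Q \<pi> \<pi>_onto] by simp
  define \<xi> where "\<xi> = inv_into ?G ?\<pi>"
  have \<xi>: "alg_iso (restrict_alg ?Q ?GQ) (restrict_alg A ?G) \<xi>"
    unfolding \<xi>_def
    using alg_iso_inv_into[OF leibniz_restrict_alg[OF A A.subalgebra_ideal[OF A.ideal_lower_lie]]
        alg_hom_restrict_alg[OF \<pi> GA] ] bij
    by (simp add: bij_betw_def)
  have \<xi>_\<pi>: "\<xi> (?\<pi> a) = a" if "a \<in> ?G" for a
    unfolding \<xi>_def using inv_into_f_f[OF inj_on_coset_lower_lie that] .
  have "\<xi> (lie_word ?Q X n) = lie_word A y n"
    if H: "\<forall>i\<le>n. X i \<in> lcarrier ?Q \<and> y i \<in> lcarrier A \<and> \<eta> (coset ?Q ?ZQ (X i)) = coset A ?Z (y i)"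
    for X y
  proof -
    define x where "x i = (SOME a. a \<in> lcarrier A \<and> ?\<pi> a = X i)" for i
    have x: "x i \<in> lcarrier A \<and> ?\<pi> (x i) = X i" if i: "i \<le> n" for i
    proof -
      have "X i \<in> ?\<pi> ` lcarrier A" using H i \<pi>_onto by auto
      then have "\<exists>a. a \<in> lcarrier A \<and> ?\<pi> a = X i" by auto
      then show ?thesis unfolding x_def by (rule someI_ex)
    qed
    have same_coset: "coset A ?Z (x i) = coset A ?Z (y i)" if i: "i \<le> n" for i
    proof -
      have "coset A ?Z (x i) = \<eta> (coset ?Q ?ZQ (?\<pi> (x i)))"
        using \<eta>_p x[OF i] by metis
      also have "\<dots> = coset A ?Z (y i)" using x[OF i] H i by simp
      finally show ?thesis .
    qed
    have "lie_word ?Q X n = lie_word ?Q (\<lambda>i. ?\<pi> (x i)) n"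
      using x by (intro lie_word_cong) simp
    also have "\<dots> = ?\<pi> (lie_word A x n)"
      using alg_hom_lie_word[OF A \<pi>] x by simp
    finally have "\<xi> (lie_word ?Q X n) = lie_word A x n"
      using \<xi>_\<pi> A.lie_word_in_lower_lie x by simp
    also have "\<dots> = lie_word A y n"
      using H x same_coset by (intro words) simp
    finally show ?thesis .
  qed
  then have "lie_isoclinism ?Q A n \<eta> \<xi>"
    unfolding lie_isoclinism_def using \<eta> \<xi> by blast
  then show ?thesis unfolding lie_isoclinic_def by blast
qed

end

section \<open>The graph of an \<open>n\<close>-Lie-isoclinism\<close>

lemma subalgebra_pullback:
  assumes A: "leibniz A" and B: "leibniz B" and M: "leibniz M"
    and f: "alg_hom A M f" and g: "alg_hom B M g"
  shows "subalgebra (dsum A B) {(a, b). a \<in> lcarrier A \<and> b \<in> lcarrier B \<and> f a = g b}"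
proof -
  interpret A: leibniz A by fact
  interpret B: leibniz B by fact
  show ?thesis
    unfolding subalgebra_def subspace_def
    by (auto simp: alg_hom_zero[OF A M f] alg_hom_zero[OF B M g] alg_hom_add[OF f] alg_hom_add[OF g]
        alg_hom_smult[OF f] alg_hom_smult[OF g] alg_hom_br[OF f] alg_hom_br[OF g])
qed

lemma alg_hom_fst: "S \<subseteq> lcarrier A \<times> lcarrier B \<Longrightarrow> alg_hom (restrict_alg (dsum A B) S) A fst"
  and alg_hom_snd: "S \<subseteq> lcarrier A \<times> lcarrier B \<Longrightarrow> alg_hom (restrict_alg (dsum A B) S) B snd"
  unfolding alg_hom_def by (auto simp: split_paired_all)

locale lie_isoclinism_graph =
  fixes L1 :: "('k::field, 'a) lalg" and L2 :: "('k, 'b) lalg" and n :: nat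
    and \<eta> :: "'a set \<Rightarrow> 'b set" and \<xi> :: "'a \<Rightarrow> 'b"
  assumes leibniz1: "leibniz L1" and leibniz2: "leibniz L2"
    and isoclinism: "lie_isoclinism L1 L2 n \<eta> \<xi>"
begin

sublocale L1: leibniz L1 by (rule leibniz1)
sublocale L2: leibniz L2 by (rule leibniz2)

abbreviation "Z1 \<equiv> upper_lie L1 n"
abbreviation "Z2 \<equiv> upper_lie L2 n"
abbreviation "G1 \<equiv> lower_lie L1 (Suc n)"
abbreviation "G2 \<equiv> lower_lie L2 (Suc n)"

definition K :: "('a \<times> 'b) set" where
  "K = {(g, h). g \<in> L1.C \<and> h \<in> L2.C \<and> \<eta> (coset L1 Z1 g) = coset L2 Z2 h}"

abbreviation "KA \<equiv> restrict_alg (dsum L1 L2) K"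

lemma eta_iso: "alg_iso (quot L1 Z1) (quot L2 Z2) \<eta>"
  and xi_iso: "alg_iso (restrict_alg L1 G1) (restrict_alg L2 G2) \<xi>"
  and xi_lie_word: "\<forall>i\<le>n. x i \<in> L1.C \<and> y i \<in> L2.C \<and> \<eta> (coset L1 Z1 (x i)) = coset L2 Z2 (y i) \<Longrightarrow>
      \<xi> (lie_word L1 x n) = lie_word L2 y n"
  using isoclinism unfolding lie_isoclinism_def by blast+

lemma mem_K: "(g, h) \<in> K \<longleftrightarrow> g \<in> L1.C \<and> h \<in> L2.C \<and> \<eta> (coset L1 Z1 g) = coset L2 Z2 h"
  unfolding K_def by simp

lemma K_subset: "K \<subseteq> L1.C \<times> L2.C"
  unfolding K_def by auto

lemma subalgebra_K: "subalgebra (dsum L1 L2) K"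
proof -
  have "alg_hom L1 (quot L2 Z2) (\<eta> \<circ> coset L1 Z1)"
    using eta_iso alg_hom_comp[OF L1.alg_hom_coset[OF L1.ideal_upper_lie]]
    unfolding alg_iso_def by blast
  from subalgebra_pullback[OF leibniz1 leibniz2 L2.leibniz_quot[OF L2.ideal_upper_lie] this
      L2.alg_hom_coset[OF L2.ideal_upper_lie]]
  show ?thesis unfolding K_def by simp
qed

sublocale KA: leibniz KA
  by (rule leibniz_restrict_alg[OF leibniz_dsum[OF leibniz1 leibniz2] subalgebra_K])

lemma ex_mem_K_snd:
  assumes "g \<in> L1.C" shows "\<exists>h. (g, h) \<in> K"
proof -
  have "\<eta> (coset L1 Z1 g) \<in> lcarrier (quot L2 Z2)"
    using assms eta_iso L1.quot_carrier unfolding alg_iso_def bij_betw_def by blast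
  then show ?thesis using assms L2.quot_carrier unfolding mem_K by auto
qed

lemma ex_mem_K_fst:
  assumes "h \<in> L2.C" shows "\<exists>g. (g, h) \<in> K"
proof -
  have "coset L2 Z2 h \<in> \<eta> ` lcarrier (quot L1 Z1)"
    using assms eta_iso L2.quot_carrier unfolding alg_iso_def bij_betw_def by blast
  then show ?thesis using assms L1.quot_carrier unfolding mem_K by auto
qed

lemma alg_hom_fst_K: "alg_hom KA L1 fst"
  and alg_hom_snd_K: "alg_hom KA L2 snd"
  using alg_hom_fst alg_hom_snd K_subset by blast+

lemma fst_K: "fst ` K = L1.C"
proof
  show "fst ` K \<subseteq> L1.C" using K_subset by auto
  show "L1.C \<subseteq> fst ` K" using ex_mem_K_snd by (metis fst_conv image_eqI subsetI)
qed

lemma snd_K: "snd ` K = L2.C"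
proof
  show "snd ` K \<subseteq> L2.C" using K_subset by auto
  show "L2.C \<subseteq> snd ` K" using ex_mem_K_fst by (metis snd_conv image_eqI subsetI)
qed

lemma lie_word_KA: "lie_word KA x k = (lie_word L1 (fst \<circ> x) k, lie_word L2 (snd \<circ> x) k)"
  by (simp add: lie_word_dsum)

lemma G1_subset: "G1 \<subseteq> L1.C"
  and G2_subset: "G2 \<subseteq> L2.C"
  using L1.lower_lie_subset L2.lower_lie_subset .

lemma xi_closed: "g \<in> G1 \<Longrightarrow> \<xi> g \<in> G2"
  and xi_add: "a \<in> G1 \<Longrightarrow> b \<in> G1 \<Longrightarrow> \<xi> (ladd L1 a b) = ladd L2 (\<xi> a) (\<xi> b)"
  and xi_smult: "a \<in> G1 \<Longrightarrow> \<xi> (lsmult L1 c a) = lsmult L2 c (\<xi> a)"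
  and inj_on_xi: "inj_on \<xi> G1"
  using xi_iso unfolding alg_iso_def alg_hom_def bij_betw_def by auto

lemma xi_zero: "\<xi> (lzero L1) = lzero L2"
proof -
  have "lzero L1 \<in> G1" using L1.ideal_zero[OF L1.ideal_lower_lie] .
  then show ?thesis
    using xi_smult[of "lzero L1" 0] xi_closed G2_subset by (simp add: subset_iff)
qed

text \<open>Collapsing the first two entries reduces words of length \<open>n + m + 1\<close> to length \<open>n + 1\<close>.\<close>
lemma xi_lie_word_add:
  "(\<forall>i\<le>n + m. (x i, y i) \<in> K) \<Longrightarrow> \<xi> (lie_word L1 x (n + m)) = lie_word L2 y (n + m)"
proof (induction m arbitrary: x y)
  case 0
  then show ?case using xi_lie_word mem_K by simp
next
  case (Suc m)
  let ?x = "\<lambda>i. if i = 0 then lie_br L1 (x 0) (x 1) else x (Suc i)"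
  let ?y = "\<lambda>i. if i = 0 then lie_br L2 (y 0) (y 1) else y (Suc i)"
  have "(?x i, ?y i) \<in> K" if "i \<le> n + m" for i
    using Suc.prems that KA.lie_closed[of "(x 0, y 0)" "(x 1, y 1)"] by auto
  then show ?case
    using Suc.IH[of ?x ?y] by (simp only: add_Suc_right lie_word_Suc_collapse) blast
qed

text \<open>Words of length \<open>n + 1\<close> are coherent and coherent elements form an ideal (for \<open>n > 0\<close>),
  so all of \<open>\<gamma>\<^sub>n\<^sub>+\<^sub>1(L1)\<close> is coherent.\<close>
definition xi_coherent :: "'a set" where
  "xi_coherent = {g \<in> G1. \<forall>m x y. (\<forall>j. 0 < j \<longrightarrow> (x j, y j) \<in> K) \<longrightarrow>
      \<xi> (lie_word L1 (x(0 := g)) m) = lie_word L2 (y(0 := \<xi> g)) m}"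

lemma xi_coherentD:
  "g \<in> xi_coherent \<Longrightarrow> \<forall>j. 0 < j \<longrightarrow> (x j, y j) \<in> K \<Longrightarrow>
    \<xi> (lie_word L1 (x(0 := g)) m) = lie_word L2 (y(0 := \<xi> g)) m"
  unfolding xi_coherent_def by blast

lemma K_tail_closed:
  "\<forall>j. 0 < j \<longrightarrow> (x j, y j) \<in> K \<Longrightarrow> \<forall>j. 0 < j \<and> j \<le> m \<longrightarrow> x j \<in> L1.C"
  "\<forall>j. 0 < j \<longrightarrow> (x j, y j) \<in> K \<Longrightarrow> \<forall>j. 0 < j \<and> j \<le> m \<longrightarrow> y j \<in> L2.C"
  using mem_K by simp_all

lemma lie_words_subset_xi_coherent: "lie_words L1 n \<subseteq> xi_coherent"
proof
  fix w assume "w \<in> lie_words L1 n"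
  then obtain u where u: "\<forall>i\<le>n. u i \<in> L1.C" "w = lie_word L1 u n"
    unfolding lie_words_def by auto
  have "\<forall>i. \<exists>h. i \<le> n \<longrightarrow> (u i, h) \<in> K" using ex_mem_K_snd u(1) by blast
  then obtain v where uv: "\<And>i. i \<le> n \<Longrightarrow> (u i, v i) \<in> K" by metis
  have \<xi>w: "\<xi> w = lie_word L2 v n" using xi_lie_word_add[of 0 u v] uv u by simp
  have "\<xi> (lie_word L1 (x(0 := w)) m) = lie_word L2 (y(0 := \<xi> w)) m"
    if K: "\<forall>j. 0 < j \<longrightarrow> (x j, y j) \<in> K" for m x y
  proof -
    have "\<xi> (lie_word L1 (x(0 := w)) m)
        = \<xi> (lie_word L1 (\<lambda>i. if i \<le> n then u i else x (i - n)) (n + m))"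
      unfolding u(2) lie_word_append ..
    also have "\<dots> = lie_word L2 (\<lambda>i. if i \<le> n then v i else y (i - n)) (n + m)"
      by (rule xi_lie_word_add) (use uv K in auto)
    also have "\<dots> = lie_word L2 (y(0 := \<xi> w)) m"
      unfolding \<xi>w lie_word_append ..
    finally show ?thesis .
  qed
  then show "w \<in> xi_coherent"
    unfolding xi_coherent_def using u L1.lie_word_in_lower_lie by simp
qed

lemma zero_xi_coherent: "lzero L1 \<in> xi_coherent"
  unfolding xi_coherent_def
  using L1.ideal_zero[OF L1.ideal_lower_lie] xi_zero
    L1.lie_word_head_zero[OF K_tail_closed(1)] L2.lie_word_head_zero[OF K_tail_closed(2)]
  by simp

lemma xi_coherent_add:
  assumes g1: "g1 \<in> xi_coherent" and g2: "g2 \<in> xi_coherent"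
  shows "ladd L1 g1 g2 \<in> xi_coherent"
proof -
  have G: "g1 \<in> G1" "g2 \<in> G1" using g1 g2 unfolding xi_coherent_def by auto
  then have C: "g1 \<in> L1.C" "g2 \<in> L1.C" "\<xi> g1 \<in> L2.C" "\<xi> g2 \<in> L2.C"
    using G1_subset G2_subset xi_closed by blast+
  have "\<xi> (lie_word L1 (x(0 := ladd L1 g1 g2)) m) = lie_word L2 (y(0 := \<xi> (ladd L1 g1 g2))) m"
    if K: "\<forall>j. 0 < j \<longrightarrow> (x j, y j) \<in> K" for m x y
  proof -
    note x = K_tail_closed(1)[OF K, of m] and y = K_tail_closed(2)[OF K, of m]
    have "\<xi> (lie_word L1 (x(0 := ladd L1 g1 g2)) m)
        = \<xi> (ladd L1 (lie_word L1 (x(0 := g1)) m) (lie_word L1 (x(0 := g2)) m))"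
      using L1.lie_word_head_add[OF x C(1,2)] by simp
    also have "\<dots> = ladd L2 (lie_word L2 (y(0 := \<xi> g1)) m) (lie_word L2 (y(0 := \<xi> g2)) m)"
      using xi_add L1.lie_word_head_in_ideal[OF L1.ideal_lower_lie _ x] G
        xi_coherentD[OF g1 K] xi_coherentD[OF g2 K] by simp
    also have "\<dots> = lie_word L2 (y(0 := \<xi> (ladd L1 g1 g2))) m"
      using L2.lie_word_head_add[OF y C(3,4)] xi_add G by simp
    finally show ?thesis .
  qed
  then show ?thesis
    unfolding xi_coherent_def using G L1.ideal_add[OF L1.ideal_lower_lie] by simp
qed

lemma xi_coherent_smult:
  assumes g: "g \<in> xi_coherent"
  shows "lsmult L1 c g \<in> xi_coherent"
proof -
  have G: "g \<in> G1" using g unfolding xi_coherent_def by auto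
  then have C: "g \<in> L1.C" "\<xi> g \<in> L2.C" using G1_subset G2_subset xi_closed by blast+
  have "\<xi> (lie_word L1 (x(0 := lsmult L1 c g)) m) = lie_word L2 (y(0 := \<xi> (lsmult L1 c g))) m"
    if K: "\<forall>j. 0 < j \<longrightarrow> (x j, y j) \<in> K" for m x y
  proof -
    note x = K_tail_closed(1)[OF K, of m] and y = K_tail_closed(2)[OF K, of m]
    have "\<xi> (lie_word L1 (x(0 := lsmult L1 c g)) m) = \<xi> (lsmult L1 c (lie_word L1 (x(0 := g)) m))"
      using L1.lie_word_head_smult[OF x C(1)] by simp
    also have "\<dots> = lsmult L2 c (lie_word L2 (y(0 := \<xi> g)) m)"
      using xi_smult L1.lie_word_head_in_ideal[OF L1.ideal_lower_lie G x] xi_coherentD[OF g K]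
      by simp
    also have "\<dots> = lie_word L2 (y(0 := \<xi> (lsmult L1 c g))) m"
      using L2.lie_word_head_smult[OF y C(2)] xi_smult G by simp
    finally show ?thesis .
  qed
  then show ?thesis
    unfolding xi_coherent_def using G L1.ideal_smult[OF L1.ideal_lower_lie] by simp
qed

lemma xi_coherent_lie_br:
  assumes g: "g \<in> xi_coherent" and a: "a \<in> L1.C"
  shows "lie_br L1 g a \<in> xi_coherent"
proof -
  have G: "g \<in> G1" using g unfolding xi_coherent_def by auto
  obtain b where ab: "(a, b) \<in> K" using ex_mem_K_snd[OF a] by blast
  have "\<xi> (lie_word L1 (x(0 := lie_br L1 g a)) m) = lie_word L2 (y(0 := \<xi> (lie_br L1 g a))) m"
    if K: "\<forall>j. 0 < j \<longrightarrow> (x j, y j) \<in> K" for m x y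
  proof -
    define x' where "x' i = (if i = 0 then g else if i = 1 then a else x (i - 1))" for i
    define y' where "y' i = (if i = 0 then \<xi> g else if i = 1 then b else y (i - 1))" for i
    have K': "\<forall>j. 0 < j \<longrightarrow> (x' j, y' j) \<in> K"
      using K ab unfolding x'_def y'_def by auto
    have \<xi>_lie: "\<xi> (lie_br L1 g a) = lie_br L2 (\<xi> g) b"
      using xi_coherentD[OF g, of "\<lambda>_. a" "\<lambda>_. b" 1] ab by simp
    have "\<xi> (lie_word L1 (x(0 := lie_br L1 g a)) m) = \<xi> (lie_word L1 (x'(0 := g)) (Suc m))"
      unfolding lie_word_Suc_collapse[of L1 "x'(0 := g)"]
      by (rule arg_cong[where f = \<xi>], rule lie_word_cong) (simp add: x'_def)
    also have "\<dots> = lie_word L2 (y'(0 := \<xi> g)) (Suc m)"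
      by (rule xi_coherentD[OF g K'])
    also have "\<dots> = lie_word L2 (y(0 := \<xi> (lie_br L1 g a))) m"
      unfolding lie_word_Suc_collapse[of L2 "y'(0 := \<xi> g)"] \<xi>_lie
      by (rule lie_word_cong) (simp add: y'_def)
    finally show ?thesis .
  qed
  then show ?thesis
    unfolding xi_coherent_def using G a L1.ideal_lie_left[OF L1.ideal_lower_lie] by simp
qed

lemma ideal_xi_coherent:
  assumes "0 < n"
  shows "ideal L1 xi_coherent"
proof (rule L1.idealI)
  show "xi_coherent \<subseteq> L1.C" unfolding xi_coherent_def using G1_subset by auto
  fix x g assume x: "x \<in> L1.C" and g: "g \<in> xi_coherent"
  have G: "g \<in> G1" and gC: "g \<in> L1.C" using g G1_subset unfolding xi_coherent_def by auto
  have left: "lbr L1 x g = lzero L1" using L1.br_lower_lie_eq_zero[OF assms G x] .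
  then show "lbr L1 x g \<in> xi_coherent" using zero_xi_coherent by simp
  have "lbr L1 g x = lie_br L1 g x" unfolding lie_br_def using left gC x by simp
  then show "lbr L1 g x \<in> xi_coherent" using xi_coherent_lie_br[OF g x] by simp
qed (fact zero_xi_coherent xi_coherent_add xi_coherent_smult)+

lemma xi_lie_br:
  assumes "0 < n" and g: "g \<in> G1" and ab: "(a, b) \<in> K"
  shows "\<xi> (lie_br L1 g a) = lie_br L2 (\<xi> g) b"
proof -
  have "G1 \<subseteq> xi_coherent"
    using L1.lower_lie_subset_ideal_gen_lie_words[of n]
      L1.ideal_gen_least[OF ideal_xi_coherent[OF assms(1)] lie_words_subset_xi_coherent] by blast
  then show ?thesis using xi_coherentD[of g "\<lambda>_. a" "\<lambda>_. b" 1] g ab by auto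
qed

definition xi_graph :: "('a \<times> 'b) set" where
  "xi_graph = {(g, \<xi> g) | g. g \<in> G1 \<and> (g, \<xi> g) \<in> K}"

lemma mem_xi_graph: "(g, h) \<in> xi_graph \<longleftrightarrow> (g, h) \<in> K \<and> g \<in> G1 \<and> h = \<xi> g"
  unfolding xi_graph_def by auto

lemma zero_xi_graph: "(lzero L1, lzero L2) \<in> xi_graph"
  using mem_xi_graph KA.zero_closed L1.ideal_zero[OF L1.ideal_lower_lie] xi_zero by simp

lemma ideal_xi_graph:
  assumes n: "0 < n"
  shows "ideal KA xi_graph"
proof (rule KA.idealI; unfold restrict_alg_simps)
  show "xi_graph \<subseteq> K" unfolding xi_graph_def by auto
  show "lzero (dsum L1 L2) \<in> xi_graph" using zero_xi_graph by simp
  note G1_ideal = L1.ideal_lower_lie[of n]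
  fix u v assume "u \<in> xi_graph"
  then obtain g where u: "u = (g, \<xi> g)" "u \<in> K" "g \<in> G1" unfolding xi_graph_def by blast
  show "lsmult (dsum L1 L2) c u \<in> xi_graph" for c
    using u KA.smult_closed[of u c] L1.ideal_smult[OF G1_ideal] xi_smult mem_xi_graph by simp
  {
    assume "v \<in> xi_graph"
    then obtain g' where v: "v = (g', \<xi> g')" "v \<in> K" "g' \<in> G1" unfolding xi_graph_def by blast
    show "ladd (dsum L1 L2) u v \<in> xi_graph"
      using u v KA.add_closed[of u v] L1.ideal_add[OF G1_ideal] xi_add mem_xi_graph by simp
  }
  assume "v \<in> K"
  then obtain a b where v: "v = (a, b)" "(a, b) \<in> K" "a \<in> L1.C" "b \<in> L2.C"
    using K_subset by (cases v) auto
  have gC: "g \<in> L1.C" and \<xi>g: "\<xi> g \<in> G2" "\<xi> g \<in> L2.C"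
    using u G1_subset G2_subset xi_closed by blast+
  have left1: "lbr L1 a g = lzero L1" using L1.br_lower_lie_eq_zero[OF n u(3) v(3)] .
  have left2: "lbr L2 b (\<xi> g) = lzero L2" using L2.br_lower_lie_eq_zero[OF n \<xi>g(1) v(4)] .
  show "lbr (dsum L1 L2) v u \<in> xi_graph" using u v left1 left2 zero_xi_graph by simp
  have "lbr L1 g a = lie_br L1 g a" "lbr L2 (\<xi> g) b = lie_br L2 (\<xi> g) b"
    unfolding lie_br_def using left1 left2 gC \<xi>g v by simp_all
  then have "\<xi> (lbr L1 g a) = lbr L2 (\<xi> g) b" using xi_lie_br[OF n u(3) v(2)] by simp
  then show "lbr (dsum L1 L2) u v \<in> xi_graph"
    using u v KA.br_closed[of u v] L1.ideal_br_right[OF G1_ideal v(3) u(3)] mem_xi_graph by simp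
qed

lemma lie_words_KA_subset_xi_graph: "lie_words KA n \<subseteq> xi_graph"
proof
  fix w assume "w \<in> lie_words KA n"
  then obtain x where x: "\<forall>i\<le>n. x i \<in> K" "w = lie_word KA x n"
    unfolding lie_words_def by auto
  have x12: "\<forall>i\<le>n. fst (x i) \<in> L1.C \<and> snd (x i) \<in> L2.C \<and>
      \<eta> (coset L1 Z1 (fst (x i))) = coset L2 Z2 (snd (x i))"
    using x(1) mem_K[of "fst (x i)" "snd (x i)" for i] by simp
  have "w \<in> K" using KA.lie_word_closed x by simp
  moreover have "lie_word L1 (fst \<circ> x) n \<in> G1"
    using L1.lie_word_in_lower_lie x12 by simp
  moreover have "\<xi> (lie_word L1 (fst \<circ> x) n) = lie_word L2 (snd \<circ> x) n"
    using xi_lie_word x12 by simp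
  ultimately show "w \<in> xi_graph" using x(2) lie_word_KA mem_xi_graph by simp
qed

lemma lower_lie_KA_subset_xi_graph: "lower_lie KA (Suc n) \<subseteq> xi_graph"
proof (cases "n = 0")
  case True
  have "(g, h) \<in> xi_graph" if "(g, h) \<in> K" for g h
    using that True xi_lie_word[of "\<lambda>_. g" "\<lambda>_. h"] mem_K mem_xi_graph by simp
  then show ?thesis using True by auto
next
  case False
  then show ?thesis
    using KA.lower_lie_subset_ideal_gen_lie_words[of n]
      KA.ideal_gen_least[OF ideal_xi_graph lie_words_KA_subset_xi_graph] by blast
qed

lemma lower_lie_KA: "lower_lie KA (Suc n) = {(g, \<xi> g) | g. g \<in> G1}"
proof
  show "lower_lie KA (Suc n) \<subseteq> {(g, \<xi> g) | g. g \<in> G1}"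
    using lower_lie_KA_subset_xi_graph unfolding xi_graph_def by blast
  show "{(g, \<xi> g) | g. g \<in> G1} \<subseteq> lower_lie KA (Suc n)"
  proof clarify
    fix g assume "g \<in> G1"
    then obtain k where k: "k \<in> lower_lie KA (Suc n)" "fst k = g"
      using image_lower_lie[OF KA.leibniz_axioms leibniz1 alg_hom_fst_K] fst_K by force
    then have "k = (g, \<xi> g)"
      using lower_lie_KA_subset_xi_graph mem_xi_graph by (cases k) auto
    then show "(g, \<xi> g) \<in> lower_lie KA (Suc n)" using k by simp
  qed
qed

lemma eta_coset_zero: "\<eta> (coset L1 Z1 (lzero L1)) = coset L2 Z2 (lzero L2)"
  using alg_hom_zero[OF L1.leibniz_quot[OF L1.ideal_upper_lie] L2.leibniz_quot[OF L2.ideal_upper_lie]]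
    eta_iso L1.quot_zero L2.quot_zero
  unfolding alg_iso_def by simp

lemma Z2_eq_kernel_fst: "{(lzero L1, h) | h. h \<in> Z2} = {k \<in> K. fst k = lzero L1}"
proof -
  have "(lzero L1, h) \<in> K \<longleftrightarrow> h \<in> L2.C \<and> coset L2 Z2 (lzero L2) = coset L2 Z2 h" for h
    unfolding mem_K eta_coset_zero by simp
  also have "\<dots> h \<longleftrightarrow> h \<in> Z2" for h
    using L2.coset_eq_zero_iff[OF L2.ideal_upper_lie, of h] L2.ideal_subset[OF L2.ideal_upper_lie]
    by auto
  finally show ?thesis by (auto simp: split_paired_all)
qed

lemma Z1_eq_kernel_snd: "{(g, lzero L2) | g. g \<in> Z1} = {k \<in> K. snd k = lzero L2}"
proof -
  have inj: "inj_on \<eta> (lcarrier (quot L1 Z1))"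
    using eta_iso unfolding alg_iso_def bij_betw_def by blast
  have "(g, lzero L2) \<in> K \<longleftrightarrow> g \<in> L1.C \<and> \<eta> (coset L1 Z1 g) = \<eta> (coset L1 Z1 (lzero L1))" for g
    unfolding mem_K eta_coset_zero by simp
  also have "\<dots> g \<longleftrightarrow> g \<in> L1.C \<and> coset L1 Z1 g = coset L1 Z1 (lzero L1)" for g
  proof -
    have "coset L1 Z1 x \<in> lcarrier (quot L1 Z1)" if "x \<in> L1.C" for x
      using that L1.quot_carrier by simp
    then show ?thesis using inj_onD[OF inj] L1.zero_closed by metis
  qed
  also have "\<dots> g \<longleftrightarrow> g \<in> Z1" for g
    using L1.coset_eq_zero_iff[OF L1.ideal_upper_lie, of g] L1.ideal_subset[OF L1.ideal_upper_lie]
    by auto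
  finally show ?thesis by (auto simp: split_paired_all)
qed

lemma ideal_Z2: "ideal KA {(lzero L1, h) | h. h \<in> Z2}"
  and ideal_Z1: "ideal KA {(g, lzero L2) | g. g \<in> Z1}"
  unfolding Z2_eq_kernel_fst Z1_eq_kernel_snd
  using ideal_kernel[OF KA.leibniz_axioms leibniz1 alg_hom_fst_K]
    ideal_kernel[OF KA.leibniz_axioms leibniz2 alg_hom_snd_K] by simp_all

lemma Z2_inter_lower_lie_KA: "{(lzero L1, h) | h. h \<in> Z2} \<inter> lower_lie KA (Suc n) = {(lzero L1, lzero L2)}"
  using lower_lie_KA xi_zero L2.ideal_zero[OF L2.ideal_upper_lie] L1.ideal_zero[OF L1.ideal_lower_lie]
  by auto

lemma Z1_inter_lower_lie_KA: "{(g, lzero L2) | g. g \<in> Z1} \<inter> lower_lie KA (Suc n) = {(lzero L1, lzero L2)}"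
proof -
  have "g = lzero L1" if "g \<in> G1" "\<xi> g = lzero L2" for g
    using that xi_zero inj_on_xi[THEN inj_onD] L1.ideal_zero[OF L1.ideal_lower_lie] by metis
  then show ?thesis
    using lower_lie_KA xi_zero L1.ideal_zero[OF L1.ideal_upper_lie] L1.ideal_zero[OF L1.ideal_lower_lie]
    by auto
qed

lemma isomorphic_L1: "isomorphic L1 (quot KA {(lzero L1, h) | h. h \<in> Z2})"
  using quot_kernel_iso[OF KA.leibniz_axioms leibniz1 ideal_Z2 alg_hom_fst_K]
  unfolding Z2_eq_kernel_fst isomorphic_def by (simp add: fst_K) blast

lemma isomorphic_L2: "isomorphic L2 (quot KA {(g, lzero L2) | g. g \<in> Z1})"
  using quot_kernel_iso[OF KA.leibniz_axioms leibniz2 ideal_Z1 alg_hom_snd_K]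
  unfolding Z1_eq_kernel_snd isomorphic_def by (simp add: snd_K) blast

lemma lie_word_L1_coset_invariant:
  assumes uv: "\<forall>i\<le>n. u i \<in> L1.C \<and> v i \<in> L1.C \<and> coset L1 Z1 (u i) = coset L1 Z1 (v i)"
  shows "lie_word L1 u n = lie_word L1 v n"
proof -
  have "\<forall>i. \<exists>h. i \<le> n \<longrightarrow> (u i, h) \<in> K" using ex_mem_K_snd uv by blast
  then obtain w where uw: "\<And>i. i \<le> n \<Longrightarrow> (u i, w i) \<in> K" by metis
  then have vw: "\<And>i. i \<le> n \<Longrightarrow> (v i, w i) \<in> K" using uv mem_K by simp
  have "\<xi> (lie_word L1 u n) = \<xi> (lie_word L1 v n)"
    using xi_lie_word_add[of 0 u w] xi_lie_word_add[of 0 v w] uw vw by simp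
  moreover have "lie_word L1 u n \<in> G1" "lie_word L1 v n \<in> G1"
    using L1.lie_word_in_lower_lie uv by auto
  ultimately show ?thesis using inj_onD[OF inj_on_xi] by blast
qed

lemma lie_word_KA_coset_invariant:
  assumes xy: "\<forall>i\<le>n. x i \<in> K \<and> y i \<in> K \<and>
      coset KA (upper_lie KA n) (x i) = coset KA (upper_lie KA n) (y i)"
  shows "lie_word KA x n = lie_word KA y n"
proof -
  have "coset L1 Z1 (fst (x i)) = coset L1 Z1 (fst (y i))" if i: "i \<le> n" for i
  proof -
    have "x i \<in> K" "y i \<in> K"
      and "coset KA (upper_lie KA n) (x i) = coset KA (upper_lie KA n) (y i)"
      using xy i by auto
    then have "y i \<in> coset KA (upper_lie KA n) (x i)"
      using KA.coset_eq_iff[OF KA.ideal_upper_lie] by simp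
    then obtain z where z: "z \<in> upper_lie KA n" "y i = ladd KA (x i) z"
      using KA.coset_memD by blast
    have "fst z \<in> Z1"
      using image_upper_lie_subset[OF KA.leibniz_axioms leibniz1 alg_hom_fst_K, of n] fst_K z(1)
      by auto
    moreover have "fst (y i) = ladd L1 (fst (x i)) (fst z)"
      using z(2) by (cases "x i", cases z) simp
    ultimately have "fst (y i) \<in> coset L1 Z1 (fst (x i))" using L1.coset_memI by metis
    moreover have "fst (x i) \<in> L1.C" "fst (y i) \<in> L1.C"
      using \<open>x i \<in> K\<close> \<open>y i \<in> K\<close> K_subset by auto
    ultimately show ?thesis
      using L1.coset_eq_iff[OF L1.ideal_upper_lie] by simp
  qed
  then have "lie_word L1 (fst \<circ> x) n = lie_word L1 (fst \<circ> y) n"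
    using xy K_subset by (intro lie_word_L1_coset_invariant) auto
  moreover have "lie_word KA x n \<in> xi_graph" "lie_word KA y n \<in> xi_graph"
    using lower_lie_KA_subset_xi_graph KA.lie_word_in_lower_lie xy by auto
  ultimately show ?thesis unfolding lie_word_KA mem_xi_graph by simp
qed

lemma lie_isoclinic_quot_Z2: "lie_isoclinic (quot KA {(lzero L1, h) | h. h \<in> Z2}) KA n"
  using lie_isoclinic_quot[OF KA.leibniz_axioms ideal_Z2 _ lie_word_KA_coset_invariant]
    Z2_inter_lower_lie_KA by simp

lemma lie_isoclinic_quot_Z1: "lie_isoclinic (quot KA {(g, lzero L2) | g. g \<in> Z1}) KA n"
  using lie_isoclinic_quot[OF KA.leibniz_axioms ideal_Z1 _ lie_word_KA_coset_invariant]
    Z1_inter_lower_lie_KA by simp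

end

theorem mainTheorem7:
  fixes L1 :: "('k::field, 'a) lalg" and L2 :: "('k, 'b) lalg"
    and n :: nat and \<eta> :: "'a set \<Rightarrow> 'b set" and \<xi> :: "'a \<Rightarrow> 'b"
    and K :: "('a \<times> 'b) set" and Z1 Z2 :: "('a \<times> 'b) set"
  assumes half: "(2::'k) \<noteq> 0"
    and L1: "leibniz_algebra L1" and L2: "leibniz_algebra L2"
    and iso: "lie_isoclinism L1 L2 n \<eta> \<xi>"
    and K_def: "K = {(g, h). g \<in> lcarrier L1 \<and> h \<in> lcarrier L2 \<and>
                  \<eta> (coset L1 (upper_lie L1 n) g) = coset L2 (upper_lie L2 n) h}"
    and Z1_def: "Z1 = {(g, lzero L2) | g. g \<in> upper_lie L1 n}"
    and Z2_def: "Z2 = {(lzero L1, h) | h. h \<in> upper_lie L2 n}"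
  shows "subalgebra (dsum L1 L2) K
    \<and> lower_lie (restrict_alg (dsum L1 L2) K) (Suc n)
        = {(g, \<xi> g) | g. g \<in> lower_lie L1 (Suc n)}
    \<and> ideal (restrict_alg (dsum L1 L2) K) Z1
    \<and> ideal (restrict_alg (dsum L1 L2) K) Z2
    \<and> Z1 \<inter> lower_lie (restrict_alg (dsum L1 L2) K) (Suc n) = {(lzero L1, lzero L2)}
    \<and> Z2 \<inter> lower_lie (restrict_alg (dsum L1 L2) K) (Suc n) = {(lzero L1, lzero L2)}
    \<and> isomorphic L1 (quot (restrict_alg (dsum L1 L2) K) Z2)
    \<and> isomorphic L2 (quot (restrict_alg (dsum L1 L2) K) Z1)
    \<and> lie_isoclinic (quot (restrict_alg (dsum L1 L2) K) Z2) (restrict_alg (dsum L1 L2) K) n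
    \<and> lie_isoclinic (quot (restrict_alg (dsum L1 L2) K) Z1) (restrict_alg (dsum L1 L2) K) n"
proof -
  interpret G: lie_isoclinism_graph L1 L2 n \<eta> \<xi>
    using L1 L2 iso by unfold_locales (simp_all add: leibniz_def)
  have K: "K = G.K" unfolding K_def G.K_def ..
  show ?thesis
    unfolding K Z1_def Z2_def
    using G.subalgebra_K G.lower_lie_KA G.ideal_Z1 G.ideal_Z2 G.Z1_inter_lower_lie_KA
      G.Z2_inter_lower_lie_KA G.isomorphic_L1 G.isomorphic_L2 G.lie_isoclinic_quot_Z2
      G.lie_isoclinic_quot_Z1
    by simp
qed

end
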